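(* Let $L=(\widehat{\mathbb L}(V),d)$ be a connected minimal cdgl with $V$ bounded above, and fix a finite filtration of $V$ by graded subspaces $V=V^0\supset V^1\supset\cdots\supset V^{q-1}\supset V^q=0$. Let $\{F^t\}_{t\ge1}$ be the associated filtration of $\widehat{\mathbb L}(V)$ and, for $n\ge1$, let $\mathcal F^n=\{\theta\in\operatorname{Der}L:\ \theta(F^r)\subset F^{n+r}\text{ for all } r\ge 1\}$. Then $\mathcal F^1$ is a complete differential graded Lie algebra with respect to the filtration $\{\mathcal F^n\}_{n\ge1}$.
   Context: All vector spaces are rational and $\mathbb Z$-graded. $\widehat{\mathbb L}(V)=\varprojlim_n \mathbb L(V)/\mathbb L(V)^n$ is the completion of the free graded Lie algebra on $V$ with respect to its lower central series; $\widehat{\mathbb L}^n(V)$ denotes the (completed) subspace of brackets of length $n$ and $\widehat{\mathbb L}^{\ge n}(V)$ that of brackets of length $\ge n$. "Connected" means concentrated in nonnegative degrees; "minimal" means $d$ is decomposable ($d(V)\subset\widehat{\mathbb L}^{\ge2}(V)$); $V$ bounded above means $V_{>m}=0$ for some $m$. $\operatorname{Der}L$ is the dgl of derivations of $L$ with the commutator bracket and differential $D=[d,-]$. The filtration $F^t$: for $n\ge1$, $p\ge0$, let $\widehat{\mathbb L}^{n,p}(V)$ be the span of the brackets $[v_1,[v_2,[\dots,[v_{n-1},v_n]\dots]]]\in\widehat{\mathbb L}^n(V)$ with $v_i\in V^{\alpha_i}$ and $\sum_i\alpha_i=p$, and set $F^{n,p}=\widehat{\mathbb L}^{n,p}(V)\oplus\widehat{\mathbb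 L}^{\ge n+1}(V)$. For $n\ge1$ and $0\le p\le nq-1$ put $F^t=F^{n,p}$ with $t=\frac{(n-1)nq}{2}+p+1$, so $\widehat{\mathbb L}(V)=F^1\supset F^2\supset\cdots$. A dgl $M$ filtered by a decreasing sequence of differential ideals $M=\mathcal F^1\supset\mathcal F^2\supset\cdots$ with $[\mathcal F^p,\mathcal F^q]\subset\mathcal F^{p+q}$ is complete if $M\to\varprojlim_n M/\mathcal F^n$ is an isomorphism. *)

theory Defs
  imports Complex_Main "HOL-Library.Function_Algebras"
begin

text \<open>V is a graded rational vector space given by a homogeneous basis indexed by
 type 'b with degree function deg. The completed tensor algebra is modelled by functions
 from words (lists of basis letters) to rationals; the completed free graded Lie algebra
 is the closure of the Lie subalgebra generated by V (degreewise completion w.r.t. bracket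
 length).\<close>

type_synonym 'b tens = "'b list \<Rightarrow> rat"

definition ksign :: "int \<Rightarrow> rat" where
  "ksign k = (if even k then 1 else -1)"

definition smul :: "rat \<Rightarrow> 'b tens \<Rightarrow> 'b tens" where
  "smul c x = (\<lambda>w. c * x w)"

definition wdeg :: "('b \<Rightarrow> int) \<Rightarrow> 'b list \<Rightarrow> int" where
  "wdeg deg w = sum_list (map deg w)"

definition degs :: "('b \<Rightarrow> int) \<Rightarrow> 'b tens \<Rightarrow> int set" where
  "degs deg x = {wdeg deg w | w. x w \<noteq> 0}"

definition homog :: "('b \<Rightarrow> int) \<Rightarrow> int \<Rightarrow> 'b tens \<Rightarrow> bool" where
  "homog deg k x \<longleftrightarrow> (\<forall>w. x w \<noteq> 0 \<longrightarrow> wdeg deg w = k)"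

definition degcomp :: "('b \<Rightarrow> int) \<Rightarrow> 'b tens \<Rightarrow> int \<Rightarrow> 'b tens" where
  "degcomp deg x k = (\<lambda>w. if wdeg deg w = k then x w else 0)"

definition lencomp :: "'b tens \<Rightarrow> nat \<Rightarrow> 'b tens" where
  "lencomp x n = (\<lambda>w. if length w = n then x w else 0)"

text \<open>Graded completed tensor algebra: finitely many degrees, and in each bracket length
 finitely many words (direct sum over degrees of the product over lengths).\<close>
definition TT :: "('b \<Rightarrow> int) \<Rightarrow> 'b tens set" where
  "TT deg = {x. finite (degs deg x) \<and> (\<forall>n. finite {w. length w = n \<and> x w \<noteq> 0})}"

text \<open>Graded commutator x y - (-1)^(|x||y|) y x, extended bilinearly.\<close>
definition br :: "('b \<Rightarrow> int) \<Rightarrow> 'b tens \<Rightarrow> 'b tens \<Rightarrow> 'b tens" where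
  "br deg x y = (\<lambda>w. \<Sum>i\<le>length w.
      x (take i w) * y (drop i w)
      - ksign (wdeg deg (take i w) * wdeg deg (drop i w)) * y (take i w) * x (drop i w))"

definition Vsp :: "('b \<Rightarrow> int) \<Rightarrow> 'b tens set" where
  "Vsp deg = {x \<in> TT deg. \<forall>w. x w \<noteq> 0 \<longrightarrow> length w = 1}"

inductive_set lspan :: "'b tens set \<Rightarrow> 'b tens set" for S where
  lspan_zero: "0 \<in> lspan S"
| lspan_base: "x \<in> S \<Longrightarrow> x \<in> lspan S"
| lspan_add: "x \<in> lspan S \<Longrightarrow> y \<in> lspan S \<Longrightarrow> x + y \<in> lspan S"
| lspan_smul: "x \<in> lspan S \<Longrightarrow> smul c x \<in> lspan S"

fun rbr :: "('b \<Rightarrow> int) \<Rightarrow> 'b tens list \<Rightarrow> 'b tens" where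
  "rbr deg [] = 0"
| "rbr deg [v] = v"
| "rbr deg (v # vs) = br deg v (rbr deg vs)"

definition Ln :: "('b \<Rightarrow> int) \<Rightarrow> nat \<Rightarrow> 'b tens set" where
  "Ln deg n = lspan {rbr deg vs | vs. length vs = n \<and> set vs \<subseteq> Vsp deg}"

definition Lhat :: "('b \<Rightarrow> int) \<Rightarrow> 'b tens set" where
  "Lhat deg = {x \<in> TT deg. \<forall>n. lencomp x n \<in> Ln deg n}"

definition Lge :: "('b \<Rightarrow> int) \<Rightarrow> nat \<Rightarrow> 'b tens set" where
  "Lge deg n = {x \<in> Lhat deg. \<forall>w. length w < n \<longrightarrow> x w = 0}"

definition Lnp :: "('b \<Rightarrow> int) \<Rightarrow> (nat \<Rightarrow> 'b tens set) \<Rightarrow> nat \<Rightarrow> nat \<Rightarrow> nat \<Rightarrow> 'b tens set" where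
  "Lnp deg Vf q n p = lspan {rbr deg vs | vs. length vs = n \<and>
      (\<exists>as. length as = n \<and> (\<forall>i<n. as ! i \<le> q \<and> vs ! i \<in> Vf (as ! i)) \<and> sum_list as = p)}"

definition Fnp :: "('b \<Rightarrow> int) \<Rightarrow> (nat \<Rightarrow> 'b tens set) \<Rightarrow> nat \<Rightarrow> nat \<Rightarrow> nat \<Rightarrow> 'b tens set" where
  "Fnp deg Vf q n p = {x \<in> Lhat deg. (\<forall>w. length w < n \<longrightarrow> x w = 0) \<and> lencomp x n \<in> Lnp deg Vf q n p}"

definition Ffilt :: "('b \<Rightarrow> int) \<Rightarrow> (nat \<Rightarrow> 'b tens set) \<Rightarrow> nat \<Rightarrow> nat \<Rightarrow> 'b tens set" where
  "Ffilt deg Vf q t = {x. \<exists>n p. 1 \<le> n \<and> p < n * q \<and> t = (n - 1) * n * q div 2 + p + 1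
                              \<and> x \<in> Fnp deg Vf q n p}"

definition is_der :: "('b \<Rightarrow> int) \<Rightarrow> int \<Rightarrow> ('b tens \<Rightarrow> 'b tens) \<Rightarrow> bool" where
  "is_der deg k \<theta> \<longleftrightarrow>
     (\<forall>x. x \<notin> Lhat deg \<longrightarrow> \<theta> x = 0) \<and>
     (\<forall>x\<in>Lhat deg. \<theta> x \<in> Lhat deg) \<and>
     (\<forall>x\<in>Lhat deg. \<forall>y\<in>Lhat deg. \<theta> (x + y) = \<theta> x + \<theta> y) \<and>
     (\<forall>c. \<forall>x\<in>Lhat deg. \<theta> (smul c x) = smul c (\<theta> x)) \<and>
     (\<forall>j. \<forall>x\<in>Lhat deg. homog deg j x \<longrightarrow> homog deg (j + k) (\<theta> x)) \<and>
     (\<forall>j. \<forall>x\<in>Lhat deg. \<forall>y\<in>Lhat deg. homog deg j x \<longrightarrow>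
         \<theta> (br deg x y) = br deg (\<theta> x) y + smul (ksign (k * j)) (br deg x (\<theta> y)))"

definition DerL :: "('b \<Rightarrow> int) \<Rightarrow> ('b tens \<Rightarrow> 'b tens) set" where
  "DerL deg = {\<theta>. \<exists>K f. finite K \<and> (\<forall>k\<in>K. is_der deg k (f k)) \<and> \<theta> = (\<lambda>x. \<Sum>k\<in>K. f k x)}"

definition dercomp :: "('b \<Rightarrow> int) \<Rightarrow> ('b tens \<Rightarrow> 'b tens) \<Rightarrow> int \<Rightarrow> ('b tens \<Rightarrow> 'b tens)" where
  "dercomp deg \<theta> k = (\<lambda>x. if x \<in> Lhat deg
      then (\<Sum>j\<in>degs deg x. degcomp deg (\<theta> (degcomp deg x j)) (j + k)) else 0)"

definition dbr :: "int \<Rightarrow> int \<Rightarrow> ('b tens \<Rightarrow> 'b tens) \<Rightarrow> ('b tens \<Rightarrow> 'b tens) \<Rightarrow> ('b tens \<Rightarrow> 'b tens)" where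
  "dbr j k \<theta> \<eta> = (\<lambda>x. \<theta> (\<eta> x) - smul (ksign (j * k)) (\<eta> (\<theta> x)))"

definition DF :: "('b \<Rightarrow> int) \<Rightarrow> (nat \<Rightarrow> 'b tens set) \<Rightarrow> nat \<Rightarrow> nat \<Rightarrow> ('b tens \<Rightarrow> 'b tens) set" where
  "DF deg Vf q n = {\<theta> \<in> DerL deg. \<forall>r\<ge>1. \<forall>x\<in>Ffilt deg Vf q r. \<theta> x \<in> Ffilt deg Vf q (n + r)}"

definition graded_subspace_V :: "('b \<Rightarrow> int) \<Rightarrow> 'b tens set \<Rightarrow> bool" where
  "graded_subspace_V deg W \<longleftrightarrow> W \<subseteq> Vsp deg \<and> 0 \<in> W \<and>
     (\<forall>x\<in>W. \<forall>y\<in>W. x + y \<in> W) \<and> (\<forall>c. \<forall>x\<in>W. smul c x \<in> W) \<and>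
     (\<forall>x\<in>W. \<forall>k. degcomp deg x k \<in> W)"

end

theory Submission
  imports Defs
begin

text \<open>
  The completed free Lie algebra is closed
  under the bracket because, by the graded Jacobi identity (inherited from associativity of
  concatenation), the bracket of two right-normed brackets of homogeneous generators is again a
  combination of right-normed brackets. The filtration F is separated wordwise: an element of
  F^t vanishes on all words of length L as soon as t exceeds tri q (L + 1), the index where
  bracket length L + 1 begins. Minimality of d means that d raises the bracket length of
  brackets of generators; with d(L^{\<ge>n+1}) \<subseteq> L^{\<ge>n+1} this gives d(F^t) \<subseteq> F^t, and hence
  [d, \<theta>] \<in> DF^n for \<theta> \<in> DF^n, while [DF^m, DF^n] \<subseteq> DF^(m+n) is immediate. Finally a sequence
  with \<Theta>(n+1) - \<Theta>(n) \<in> DF^n is eventually constant on words of each bounded length, and its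
  wordwise limit is a derivation which differs from \<Theta>(n) by an element of DF^n.
\<close>

lemma sum_fun_apply: "(\<Sum>i\<in>S. f i) (w::'a) = (\<Sum>i\<in>S. f i w)"
  by (induction S rule: infinite_finite_induct) auto

lemma smul_apply [simp]: "smul c x w = c * x w"
  by (simp add: smul_def)

lemma degcomp_apply: "degcomp deg x k w = (if wdeg deg w = k then x w else 0)"
  by (simp add: degcomp_def)

lemma lencomp_apply: "lencomp x n w = (if length w = n then x w else 0)"
  by (simp add: lencomp_def)

lemma wdeg_append [simp]: "wdeg deg (u @ v) = wdeg deg u + wdeg deg v"
  by (simp add: wdeg_def)

lemma wdeg_take_drop: "wdeg deg (take i w) + wdeg deg (drop i w) = wdeg deg w"
  by (metis append_take_drop_id wdeg_append)

lemma ksign_add: "ksign (a + b) = ksign a * ksign b"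
  by (auto simp: ksign_def)

lemma ksign_mult_self: "ksign a * ksign a = 1"
  by (auto simp: ksign_def)

lemma smul_add: "smul c (x + y) = smul c x + smul c y"
  by (simp add: fun_eq_iff algebra_simps)

lemma smul_smul: "smul c (smul e x) = smul (c * e) x"
  by (simp add: fun_eq_iff)

lemma smul_zero [simp]: "smul c 0 = 0"
  by (simp add: fun_eq_iff)

lemma diff_eq_add_smul: "x - y = x + smul (-1) y"
  by (simp add: fun_eq_iff)

lemma smul_sum: "smul c (\<Sum>i\<in>S. f i) = (\<Sum>i\<in>S. smul c (f i))"
  by (simp add: fun_eq_iff sum_fun_apply sum_distrib_left)

lemma degcomp_add: "degcomp deg (x + y) k = degcomp deg x k + degcomp deg y k"
  by (simp add: fun_eq_iff degcomp_apply)

lemma degcomp_smul: "degcomp deg (smul c x) k = smul c (degcomp deg x k)"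
  by (simp add: fun_eq_iff degcomp_apply)

lemma degcomp_zero [simp]: "degcomp deg 0 k = 0"
  by (simp add: fun_eq_iff degcomp_apply)

lemma degcomp_sum: "degcomp deg (\<Sum>i\<in>S. f i) k = (\<Sum>i\<in>S. degcomp deg (f i) k)"
  by (simp add: fun_eq_iff degcomp_apply sum_fun_apply)

lemma lencomp_add: "lencomp (x + y) n = lencomp x n + lencomp y n"
  by (simp add: fun_eq_iff lencomp_apply)

lemma lencomp_smul: "lencomp (smul c x) n = smul c (lencomp x n)"
  by (simp add: fun_eq_iff lencomp_apply)

lemma lencomp_zero [simp]: "lencomp 0 n = 0"
  by (simp add: fun_eq_iff lencomp_apply)

lemma lencomp_lencomp: "lencomp (lencomp x n) m = (if m = n then lencomp x n else 0)"
  by (simp add: fun_eq_iff lencomp_apply)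

lemma degcomp_lencomp: "degcomp deg (lencomp x n) k = lencomp (degcomp deg x k) n"
  by (simp add: fun_eq_iff lencomp_apply degcomp_apply)

lemma degcomp_decomp:
  assumes "finite (degs deg x)"
  shows "x = (\<Sum>j\<in>degs deg x. degcomp deg x j)"
proof
  fix w
  have "(\<Sum>j\<in>degs deg x. degcomp deg x j) w = (\<Sum>j\<in>degs deg x. if wdeg deg w = j then x w else 0)"
    by (simp add: sum_fun_apply degcomp_apply)
  also have "\<dots> = x w"
    using assms by (auto simp: sum.delta degs_def)
  finally show "x w = (\<Sum>j\<in>degs deg x. degcomp deg x j) w" by simp
qed

lemma homog_zero [simp]: "homog deg k 0"
  by (simp add: homog_def)

lemma homog_add: "homog deg k x \<Longrightarrow> homog deg k y \<Longrightarrow> homog deg k (x + y)"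
  by (auto simp: homog_def) (metis add.right_neutral)

lemma homog_smul: "homog deg k x \<Longrightarrow> homog deg k (smul c x)"
  by (auto simp: homog_def)

lemma homog_diff: "homog deg k x \<Longrightarrow> homog deg k y \<Longrightarrow> homog deg k (x - y)"
  unfolding diff_eq_add_smul by (intro homog_add homog_smul)

lemma homog_degcomp: "homog deg j (degcomp deg x j)"
  by (simp add: homog_def degcomp_apply)

lemma degcomp_homog_same: "homog deg j x \<Longrightarrow> degcomp deg x j = x"
  by (auto simp: homog_def degcomp_apply fun_eq_iff)

lemma degcomp_homog_other: "homog deg j x \<Longrightarrow> k \<noteq> j \<Longrightarrow> degcomp deg x k = 0"
  by (auto simp: homog_def degcomp_apply fun_eq_iff)

lemma TT_finite_support: "finite {w. x w \<noteq> 0} \<Longrightarrow> x \<in> TT deg"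
proof -
  assume fin: "finite {w. x w \<noteq> 0}"
  have "degs deg x = wdeg deg ` {w. x w \<noteq> 0}"
    by (auto simp: degs_def)
  with fin show ?thesis
    unfolding TT_def by (auto intro: finite_subset[OF _ fin])
qed

lemma TT_zero: "0 \<in> TT deg"
  by (rule TT_finite_support) simp

lemma TT_support_subset:
  assumes "x \<in> TT deg" "\<And>w. y w \<noteq> 0 \<Longrightarrow> x w \<noteq> 0"
  shows "y \<in> TT deg"
proof -
  have "degs deg y \<subseteq> degs deg x"
    using assms(2) by (auto simp: degs_def)
  moreover have "{w. length w = n \<and> y w \<noteq> 0} \<subseteq> {w. length w = n \<and> x w \<noteq> 0}" for n
    using assms(2) by auto
  ultimately show ?thesis
    using assms(1) unfolding TT_def mem_Collect_eq by (meson finite_subset)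
qed

lemma TT_add:
  assumes "x \<in> TT deg" "y \<in> TT deg"
  shows "x + y \<in> TT deg"
proof -
  have "degs deg (x + y) \<subseteq> degs deg x \<union> degs deg y"
    by (auto simp: degs_def)
  moreover have "{w. length w = n \<and> (x + y) w \<noteq> 0}
      \<subseteq> {w. length w = n \<and> x w \<noteq> 0} \<union> {w. length w = n \<and> y w \<noteq> 0}" for n
    by auto
  ultimately show ?thesis
    using assms unfolding TT_def mem_Collect_eq by (meson finite_UnI finite_subset)
qed

lemma TT_smul: "x \<in> TT deg \<Longrightarrow> smul c x \<in> TT deg"
  by (erule TT_support_subset) simp

lemma TT_degcomp: "x \<in> TT deg \<Longrightarrow> degcomp deg x k \<in> TT deg"
  by (erule TT_support_subset) (simp add: degcomp_apply split: if_splits)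

lemma TT_lencomp: "x \<in> TT deg \<Longrightarrow> lencomp x m \<in> TT deg"
  by (erule TT_support_subset) (simp add: lencomp_apply split: if_splits)

lemma lspan_sum: "(\<forall>i\<in>S. f i \<in> lspan G) \<Longrightarrow> (\<Sum>i\<in>S. f i) \<in> lspan G"
  by (induction S rule: infinite_finite_induct) (auto intro: lspan.intros)

lemma lspan_diff: "x \<in> lspan G \<Longrightarrow> y \<in> lspan G \<Longrightarrow> x - y \<in> lspan G"
  unfolding diff_eq_add_smul by (auto intro: lspan.intros)

lemma lspan_subset: "z \<in> lspan G \<Longrightarrow> G \<subseteq> lspan H \<Longrightarrow> z \<in> lspan H"
  by (induction z rule: lspan.induct) (auto intro: lspan.intros)

lemma lspan_mono: "z \<in> lspan G \<Longrightarrow> G \<subseteq> H \<Longrightarrow> z \<in> lspan H"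
  by (erule lspan_subset) (auto intro: lspan.intros)

lemma lspan_linear_image:
  assumes "f 0 = 0" "\<And>x y. f (x + y) = f x + f y" "\<And>c x. f (smul c x) = smul c (f x)"
    and "\<And>g. g \<in> G \<Longrightarrow> f g \<in> lspan H"
  shows "z \<in> lspan G \<Longrightarrow> f z \<in> lspan H"
proof (induction z rule: lspan.induct)
  case lspan_zero
  then show ?case by (subst assms(1)) (rule lspan.intros)
next
  case (lspan_base x)
  then show ?case by (rule assms(4))
next
  case (lspan_add x y)
  then show ?case by (subst assms(2)) (rule lspan.intros)
next
  case (lspan_smul x c)
  then show ?case by (subst assms(3)) (rule lspan.intros)
qed

lemma lspan_singleton_zero: "z \<in> lspan {0} \<Longrightarrow> z = 0"
  by (induction z rule: lspan.induct) auto

lemma lspan_degcomp: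
  "z \<in> lspan G \<Longrightarrow> (\<And>g. g \<in> G \<Longrightarrow> degcomp deg g k \<in> lspan H) \<Longrightarrow> degcomp deg z k \<in> lspan H"
  by (rule lspan_linear_image[where f="\<lambda>z. degcomp deg z k"]) (auto simp: degcomp_add degcomp_smul)

section \<open>The graded commutator\<close>

lemma br_apply: "br deg x y w = (\<Sum>i\<le>length w.
      x (take i w) * y (drop i w)
      - ksign (wdeg deg (take i w) * wdeg deg (drop i w)) * y (take i w) * x (drop i w))"
  by (simp add: br_def)

lemma br_add_left: "br deg (x + x') y = br deg x y + br deg x' y"
  by (simp add: fun_eq_iff br_apply sum.distrib[symmetric] algebra_simps)

lemma br_add_right: "br deg x (y + y') = br deg x y + br deg x y'"
  by (simp add: fun_eq_iff br_apply sum.distrib[symmetric] algebra_simps)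

lemma br_smul_left: "br deg (smul c x) y = smul c (br deg x y)"
  by (simp add: fun_eq_iff br_apply sum_distrib_left algebra_simps)

lemma br_smul_right: "br deg x (smul c y) = smul c (br deg x y)"
  by (simp add: fun_eq_iff br_apply sum_distrib_left algebra_simps)

lemma br_diff_left: "br deg (x - x') y = br deg x y - br deg x' y"
  by (simp add: fun_eq_iff br_apply sum_subtractf[symmetric] algebra_simps)

lemma br_diff_right: "br deg x (y - y') = br deg x y - br deg x y'"
  by (simp add: fun_eq_iff br_apply sum_subtractf[symmetric] algebra_simps)

lemma br_zero_left [simp]: "br deg 0 y = 0"
  by (simp add: fun_eq_iff br_apply)

lemma br_zero_right [simp]: "br deg x 0 = 0"
  by (simp add: fun_eq_iff br_apply)

lemma br_sum_left: "br deg (\<Sum>i\<in>S. f i) y = (\<Sum>i\<in>S. br deg (f i) y)"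
  by (induction S rule: infinite_finite_induct)
    (simp_all only: sum.empty sum.infinite sum.insert br_zero_left br_add_left not_False_eq_True)

lemma br_local:
  assumes "\<And>u. length u \<le> length w \<Longrightarrow> x u = x' u \<and> y u = y' u"
  shows "br deg x y w = br deg x' y' w"
  unfolding br_apply by (rule sum.cong) (auto simp: assms)

lemma br_vanish:
  assumes "\<And>u. length u < m \<Longrightarrow> x u = 0" "\<And>u. length u < n \<Longrightarrow> y u = 0"
    and "length w < m + n"
  shows "br deg x y w = 0"
  unfolding br_apply
proof (rule sum.neutral, intro ballI)
  fix i assume "i \<in> {..length w}"
  then have "length (take i w) < m \<or> length (drop i w) < n"
    and "length (take i w) < n \<or> length (drop i w) < m"
    using assms(3) by auto
  then show "x (take i w) * y (drop i w) -
      ksign (wdeg deg (take i w) * wdeg deg (drop i w)) * y (take i w) * x (drop i w) = 0"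
    using assms(1,2) by auto
qed

lemma br_nonzero_split:
  assumes "br deg x y w \<noteq> 0"
  shows "\<exists>u v. w = u @ v \<and> ((x u \<noteq> 0 \<and> y v \<noteq> 0) \<or> (y u \<noteq> 0 \<and> x v \<noteq> 0))"
proof -
  from assms obtain i where
    "x (take i w) * y (drop i w)
      - ksign (wdeg deg (take i w) * wdeg deg (drop i w)) * y (take i w) * x (drop i w) \<noteq> 0"
    unfolding br_apply by (meson sum.neutral)
  then show ?thesis
    by (intro exI[of _ "take i w"] exI[of _ "drop i w"]) auto
qed

lemma finite_support_br:
  assumes "finite {w. x w \<noteq> 0}" "finite {w. y w \<noteq> 0}"
  shows "finite {w. br deg x y w \<noteq> 0}"
proof (rule finite_subset)
  let ?X = "{w. x w \<noteq> 0}" and ?Y = "{w. y w \<noteq> 0}"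
  show "{w. br deg x y w \<noteq> 0} \<subseteq> (\<lambda>(u, v). u @ v) ` (?X \<times> ?Y \<union> ?Y \<times> ?X)"
    by (auto dest!: br_nonzero_split[of deg])
  show "finite ((\<lambda>(u, v). u @ v) ` (?X \<times> ?Y \<union> ?Y \<times> ?X))"
    using assms by auto
qed

lemma degs_br_subset: "degs deg (br deg x y) \<subseteq> (\<lambda>(a, b). a + b) ` (degs deg x \<times> degs deg y)"
proof
  fix e assume "e \<in> degs deg (br deg x y)"
  then obtain w where w: "e = wdeg deg w" "br deg x y w \<noteq> 0"
    by (auto simp: degs_def)
  then obtain u v where "w = u @ v" "(x u \<noteq> 0 \<and> y v \<noteq> 0) \<or> (y u \<noteq> 0 \<and> x v \<noteq> 0)"
    using br_nonzero_split by blast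
  then have "(wdeg deg u, wdeg deg v) \<in> degs deg x \<times> degs deg y
      \<or> (wdeg deg v, wdeg deg u) \<in> degs deg x \<times> degs deg y"
    by (auto simp: degs_def)
  moreover have "e = (\<lambda>(a, b). a + b) (wdeg deg u, wdeg deg v)"
    "e = (\<lambda>(a, b). a + b) (wdeg deg v, wdeg deg u)"
    using w \<open>w = u @ v\<close> by simp_all
  ultimately show "e \<in> (\<lambda>(a, b). a + b) ` (degs deg x \<times> degs deg y)"
    by blast
qed

lemma degcomp_br_homog:
  assumes x: "homog deg a x"
  shows "degcomp deg (br deg x y) k = br deg x (degcomp deg y (k - a))"
proof
  fix w
  have "x (take i w) * degcomp deg y (k - a) (drop i w)
      = (if wdeg deg w = k then x (take i w) * y (drop i w) else 0)"
    "ksign (wdeg deg (take i w) * wdeg deg (drop i w)) * degcomp deg y (k - a) (take i w) * x (drop i w)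
      = (if wdeg deg w = k
         then ksign (wdeg deg (take i w) * wdeg deg (drop i w)) * y (take i w) * x (drop i w) else 0)"
    for i
    using x wdeg_take_drop[of deg i w] by (auto simp: homog_def degcomp_apply)
  then show "degcomp deg (br deg x y) k w = br deg x (degcomp deg y (k - a)) w"
    by (simp add: degcomp_apply br_apply)
qed

lemma degcomp_br:
  assumes "finite (degs deg x)"
  shows "degcomp deg (br deg x y) k
    = (\<Sum>a\<in>degs deg x. br deg (degcomp deg x a) (degcomp deg y (k - a)))"
proof -
  have "br deg x y = (\<Sum>a\<in>degs deg x. br deg (degcomp deg x a) y)"
    by (subst degcomp_decomp[OF assms]) (rule br_sum_left)
  then show ?thesis
    by (simp add: degcomp_sum degcomp_br_homog[OF homog_degcomp])
qed

lemma br_lencomp_apply: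
  assumes "length w = n" "a \<le> n"
  shows "br deg (lencomp x a) (lencomp y (n - a)) w = x (take a w) * y (drop a w)
    - ksign (wdeg deg (take (n - a) w) * wdeg deg (drop (n - a) w)) * y (take (n - a) w) * x (drop (n - a) w)"
proof -
  have "br deg (lencomp x a) (lencomp y (n - a)) w
      = (\<Sum>i\<le>n. if i = a then x (take i w) * y (drop i w) else 0)
      - (\<Sum>i\<le>n. if i = n - a then ksign (wdeg deg (take i w) * wdeg deg (drop i w))
          * y (take i w) * x (drop i w) else 0)"
    unfolding br_apply sum_subtractf[symmetric] using assms
    by (intro sum.cong) (auto simp: lencomp_apply)
  then show ?thesis
    using assms by simp
qed

lemma sum_atMost_rev: "(\<Sum>i\<le>n. g (n - i)) = (\<Sum>i\<le>(n::nat). g i)"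
  by (rule sum.reindex_bij_witness[where i = "\<lambda>i. n - i" and j = "\<lambda>i. n - i"]) auto

lemma lencomp_br:
  "lencomp (br deg x y) n = (\<Sum>a\<le>n. br deg (lencomp x a) (lencomp y (n - a)))"
proof
  fix w
  show "lencomp (br deg x y) n w = (\<Sum>a\<le>n. br deg (lencomp x a) (lencomp y (n - a))) w"
  proof (cases "length w = n")
    case False
    then have "br deg (lencomp x a) (lencomp y (n - a)) w = 0" if "a \<le> n" for a
      unfolding br_apply using that by (intro sum.neutral) (auto simp: lencomp_apply)
    then show ?thesis
      using False by (simp add: lencomp_apply sum_fun_apply)
  next
    case True
    let ?s = "\<lambda>i. ksign (wdeg deg (take i w) * wdeg deg (drop i w))"
    have "(\<Sum>a\<le>n. br deg (lencomp x a) (lencomp y (n - a))) w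
      = (\<Sum>a\<le>n. x (take a w) * y (drop a w))
        - (\<Sum>a\<le>n. ?s (n - a) * y (take (n - a) w) * x (drop (n - a) w))"
      using True by (simp add: sum_fun_apply br_lencomp_apply sum_subtractf)
    also have "\<dots> = lencomp (br deg x y) n w"
      using True by (simp add: sum_atMost_rev[where g = "\<lambda>i. ?s i * y (take i w) * x (drop i w)"]
          br_apply lencomp_apply sum_subtractf)
    finally show ?thesis
      by simp
  qed
qed

lemma lspan_br_right: "z \<in> lspan G \<Longrightarrow> br deg u z \<in> lspan ((\<lambda>g. br deg u g) ` G)"
  by (rule lspan_linear_image[where f="br deg u"]) (auto simp: br_add_right br_smul_right intro: lspan_base)

lemma lspan_br:
  assumes "z1 \<in> lspan G1" "z2 \<in> lspan G2"
    and "\<And>g1 g2. g1 \<in> G1 \<Longrightarrow> g2 \<in> G2 \<Longrightarrow> br deg g1 g2 \<in> lspan G"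
  shows "br deg z1 z2 \<in> lspan G"
proof (rule lspan_linear_image[where f="\<lambda>z. br deg z z2", OF _ _ _ _ assms(1)])
  fix g1 assume "g1 \<in> G1"
  then show "br deg g1 z2 \<in> lspan G"
    by (intro lspan_linear_image[where f="br deg g1", OF _ _ _ _ assms(2)])
      (simp_all add: br_add_right br_smul_right assms(3))
qed (simp_all add: br_add_left br_smul_left)

lemma Vsp_finite_support:
  assumes "x \<in> Vsp deg"
  shows "finite {w. x w \<noteq> 0}"
proof -
  have "{w. x w \<noteq> 0} = {w. length w = 1 \<and> x w \<noteq> 0}"
    using assms by (auto simp: Vsp_def)
  then show ?thesis
    using assms by (simp add: Vsp_def TT_def)
qed

lemma Vsp_TT: "x \<in> Vsp deg \<Longrightarrow> x \<in> TT deg"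
  by (simp add: Vsp_def)

lemma Vsp_degcomp: "x \<in> Vsp deg \<Longrightarrow> degcomp deg x k \<in> Vsp deg"
  by (auto simp: Vsp_def TT_degcomp degcomp_apply)

lemma Vsp_vanish: "x \<in> Vsp deg \<Longrightarrow> length w \<noteq> 1 \<Longrightarrow> x w = 0"
  by (auto simp: Vsp_def)

lemma rbr_Cons: "us \<noteq> [] \<Longrightarrow> rbr deg (v # us) = br deg v (rbr deg us)"
  by (cases us) auto

lemma rbr_support:
  "set vs \<subseteq> Vsp deg \<Longrightarrow> vs \<noteq> [] \<Longrightarrow>
    finite {w. rbr deg vs w \<noteq> 0} \<and> (\<forall>w. rbr deg vs w \<noteq> 0 \<longrightarrow> length w = length vs)"
proof (induction deg vs rule: rbr.induct)
  case (2 deg v)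
  then show ?case by (auto simp: Vsp_finite_support Vsp_def)
next
  case (3 deg v w vs)
  let ?R = "rbr deg (w # vs)"
  from 3 have IH: "finite {u. ?R u \<noteq> 0}" "\<And>u. ?R u \<noteq> 0 \<Longrightarrow> length u = length (w # vs)"
    by auto
  have v: "v \<in> Vsp deg"
    using 3 by auto
  have "length u = length (v # w # vs)" if "br deg v ?R u \<noteq> 0" for u
    using br_nonzero_split[OF that] IH(2) v by (auto simp: Vsp_def)
  then show ?case
    using finite_support_br[OF Vsp_finite_support[OF v] IH(1)] by simp
qed simp

lemma rbr_Ln: "set vs \<subseteq> Vsp deg \<Longrightarrow> rbr deg vs \<in> Ln deg (length vs)"
  unfolding Ln_def by (auto intro!: lspan_base)

lemma Ln_zero: "0 \<in> Ln deg n"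
  by (simp add: Ln_def lspan_zero)

lemma Lhat_zero: "0 \<in> Lhat deg"
  by (simp add: Lhat_def TT_zero Ln_zero)

lemma rbr_Lhat:
  assumes vs: "set vs \<subseteq> Vsp deg"
  shows "rbr deg vs \<in> Lhat deg"
proof (cases "vs = []")
  case False
  note support = rbr_support[OF vs False]
  have "lencomp (rbr deg vs) n = (if n = length vs then rbr deg vs else 0)" for n
    using support by (auto simp: fun_eq_iff lencomp_apply)
  then have "lencomp (rbr deg vs) n \<in> Ln deg n" for n
    using rbr_Ln[OF vs] by (simp add: Ln_zero)
  then show ?thesis
    using support by (simp add: Lhat_def TT_finite_support)
qed (simp add: Lhat_zero)

lemma Vsp_Lhat: "x \<in> Vsp deg \<Longrightarrow> x \<in> Lhat deg"
  using rbr_Lhat[of "[x]"] by simp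

lemma Lhat_add: "x \<in> Lhat deg \<Longrightarrow> y \<in> Lhat deg \<Longrightarrow> x + y \<in> Lhat deg"
  by (auto simp: Lhat_def TT_add lencomp_add Ln_def intro: lspan_add)

lemma Lhat_smul: "x \<in> Lhat deg \<Longrightarrow> smul c x \<in> Lhat deg"
  by (auto simp: Lhat_def TT_smul lencomp_smul Ln_def intro: lspan_smul)

lemma Lhat_diff: "x \<in> Lhat deg \<Longrightarrow> y \<in> Lhat deg \<Longrightarrow> x - y \<in> Lhat deg"
  unfolding diff_eq_add_smul by (intro Lhat_add Lhat_smul)

lemma Lhat_sum: "(\<forall>i\<in>S. f i \<in> Lhat deg) \<Longrightarrow> (\<Sum>i\<in>S. f i) \<in> Lhat deg"
proof (induction S rule: infinite_finite_induct)
  case (insert i F)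
  then show ?case
    unfolding sum.insert[OF insert.hyps] by (intro Lhat_add) auto
qed (metis sum.infinite sum.empty Lhat_zero)+

lemma Lhat_lencomp: "x \<in> Lhat deg \<Longrightarrow> lencomp x n \<in> Lhat deg"
  by (auto simp: Lhat_def TT_lencomp lencomp_lencomp Ln_zero)

lemma Lhat_finite_degs: "x \<in> Lhat deg \<Longrightarrow> finite (degs deg x)"
  by (simp add: Lhat_def TT_def)

lemma Lhat_empty_word: "x \<in> Lhat deg \<Longrightarrow> x [] = 0"
proof -
  assume "x \<in> Lhat deg"
  then have "lencomp x 0 \<in> Ln deg 0"
    by (simp add: Lhat_def)
  then have "lencomp x 0 \<in> lspan {0}"
    by (simp add: Ln_def)
  then have "lencomp x 0 = 0"
    by (rule lspan_singleton_zero)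
  then show "x [] = 0"
    by (metis lencomp_apply list.size(3) zero_fun_apply)
qed

definition degcomp_brackets :: "('b \<Rightarrow> int) \<Rightarrow> 'b tens list \<Rightarrow> 'b tens set" where
  "degcomp_brackets deg vs =
    {rbr deg us | us. length us = length vs \<and> (\<forall>i<length vs. \<exists>a. us ! i = degcomp deg (vs ! i) a)}"

lemma degcomp_rbr:
  "set vs \<subseteq> TT deg \<Longrightarrow> degcomp deg (rbr deg vs) k \<in> lspan (degcomp_brackets deg vs)"
proof (induction deg vs arbitrary: k rule: rbr.induct)
  case (1 deg)
  then show ?case by (metis degcomp_zero lspan_zero rbr.simps(1))
next
  case (2 deg v)
  show ?case
    unfolding degcomp_brackets_def
    by (rule lspan_base) (auto intro!: exI[of _ "[degcomp deg v k]"])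
next
  case (3 deg v w vs)
  let ?R = "rbr deg (w # vs)"
  have fin: "finite (degs deg v)"
    using 3 by (simp add: TT_def)
  have "br deg (degcomp deg v a) (degcomp deg ?R (k - a)) \<in> lspan (degcomp_brackets deg (v # w # vs))"
    for a
  proof (rule lspan_mono)
    show "br deg (degcomp deg v a) (degcomp deg ?R (k - a))
        \<in> lspan (br deg (degcomp deg v a) ` degcomp_brackets deg (w # vs))"
      using 3 by (intro lspan_br_right) auto
    show "br deg (degcomp deg v a) ` degcomp_brackets deg (w # vs) \<subseteq> degcomp_brackets deg (v # w # vs)"
    proof
      fix z assume "z \<in> br deg (degcomp deg v a) ` degcomp_brackets deg (w # vs)"
      then obtain us where us: "length us = length (w # vs)"
          "\<forall>i<length (w # vs). \<exists>a. us ! i = degcomp deg ((w # vs) ! i) a"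
        and z: "z = br deg (degcomp deg v a) (rbr deg us)"
        unfolding degcomp_brackets_def by blast
      then have "z = rbr deg (degcomp deg v a # us)"
        by (metis rbr_Cons length_0_conv list.distinct(1))
      moreover have "\<forall>i<length (v # w # vs). \<exists>b. (degcomp deg v a # us) ! i = degcomp deg ((v # w # vs) ! i) b"
        using us by (auto simp: nth_Cons split: nat.splits)
      ultimately show "z \<in> degcomp_brackets deg (v # w # vs)"
        using us unfolding degcomp_brackets_def by (intro CollectI exI[of _ "degcomp deg v a # us"]) auto
    qed
  qed
  then show ?case
    by (simp add: degcomp_br[OF fin] lspan_sum)
qed

lemma Ln_degcomp: "z \<in> Ln deg n \<Longrightarrow> degcomp deg z k \<in> Ln deg n"
  unfolding Ln_def
proof (erule lspan_degcomp)
  fix g assume "g \<in> {rbr deg vs |vs. length vs = n \<and> set vs \<subseteq> Vsp deg}"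
  then obtain vs where g: "g = rbr deg vs" "length vs = n" "set vs \<subseteq> Vsp deg"
    by blast
  have "degcomp deg g k \<in> lspan (degcomp_brackets deg vs)"
    using g Vsp_TT by (auto intro: degcomp_rbr)
  moreover have "degcomp_brackets deg vs \<subseteq> {rbr deg vs |vs. length vs = n \<and> set vs \<subseteq> Vsp deg}"
  proof
    fix z assume "z \<in> degcomp_brackets deg vs"
    then obtain us where us: "z = rbr deg us" "length us = length vs"
        "\<forall>i<length vs. \<exists>a. us ! i = degcomp deg (vs ! i) a"
      unfolding degcomp_brackets_def by blast
    then have "us ! i \<in> Vsp deg" if "i < length us" for i
      using g(3) that by (metis Vsp_degcomp nth_mem subsetD)
    then have "set us \<subseteq> Vsp deg"
      by (auto simp: set_conv_nth)
    then show "z \<in> {rbr deg vs |vs. length vs = n \<and> set vs \<subseteq> Vsp deg}"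
      using us g by auto
  qed
  ultimately show "degcomp deg g k \<in> lspan {rbr deg vs |vs. length vs = n \<and> set vs \<subseteq> Vsp deg}"
    by (rule lspan_mono)
qed

lemma Lhat_degcomp: "x \<in> Lhat deg \<Longrightarrow> degcomp deg x k \<in> Lhat deg"
  by (auto simp: Lhat_def TT_degcomp degcomp_lencomp[symmetric] Ln_degcomp)

section \<open>The graded Jacobi identity\<close>

definition mul :: "'b tens \<Rightarrow> 'b tens \<Rightarrow> 'b tens" where
  "mul x y = (\<lambda>w. \<Sum>i\<le>length w. x (take i w) * y (drop i w))"

lemma mul_apply: "mul x y w = (\<Sum>i\<le>length w. x (take i w) * y (drop i w))"
  by (simp add: mul_def)

lemma mul_assoc: "mul (mul x y) z = mul x (mul y z)"
proof
  fix w :: "'a list"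
  let ?n = "length w"
  define F where "F j l = x (take j w) * y (take l (drop j w)) * z (drop (j + l) w)" for j l
  have "mul (mul x y) z w = (\<Sum>i\<le>?n. \<Sum>j\<le>i. x (take j (take i w)) * y (drop j (take i w)) * z (drop i w))"
    by (simp add: mul_apply sum_distrib_right min_absorb1)
  also have "\<dots> = (\<Sum>i\<le>?n. \<Sum>j\<le>i. F j (i - j))"
    by (intro sum.cong refl) (auto simp: F_def min_absorb1 drop_take)
  also have "\<dots> = (\<Sum>(j, l)\<in>{(j, l). j + l \<le> ?n}. F j l)"
    by (rule sum.triangle_reindex_eq[symmetric])
  also have "{(j, l). j + l \<le> ?n} = Sigma {..?n} (\<lambda>j. {..?n - j})"
    by auto
  also have "(\<Sum>(j, l)\<in>Sigma {..?n} (\<lambda>j. {..?n - j}). F j l) = (\<Sum>j\<le>?n. \<Sum>l\<le>?n - j. F j l)"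
    by (rule sum.Sigma[symmetric]) auto
  also have "\<dots> = mul x (mul y z) w"
    by (simp add: mul_apply sum_distrib_left F_def mult.assoc add.commute)
  finally show "mul (mul x y) z w = mul x (mul y z) w" .
qed

lemma mul_diff_left: "mul (x - x') y = mul x y - mul x' y"
  by (simp add: fun_eq_iff mul_apply sum_subtractf[symmetric] algebra_simps)

lemma mul_diff_right: "mul x (y - y') = mul x y - mul x y'"
  by (simp add: fun_eq_iff mul_apply sum_subtractf[symmetric] algebra_simps)

lemma mul_smul_left: "mul (smul c x) y = smul c (mul x y)"
  by (simp add: fun_eq_iff mul_apply sum_distrib_left algebra_simps)

lemma mul_smul_right: "mul x (smul c y) = smul c (mul x y)"
  by (simp add: fun_eq_iff mul_apply sum_distrib_left algebra_simps)

lemmas mul_linear = mul_diff_left mul_diff_right mul_smul_left mul_smul_right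

lemma homog_mul:
  assumes "homog deg a x" "homog deg b y"
  shows "homog deg (a + b) (mul x y)"
  unfolding homog_def
proof (intro allI impI)
  fix w assume "mul x y w \<noteq> 0"
  then obtain i where "x (take i w) * y (drop i w) \<noteq> 0"
    unfolding mul_apply by (meson sum.neutral)
  then have "wdeg deg (take i w) = a" "wdeg deg (drop i w) = b"
    using assms by (auto simp: homog_def)
  then show "wdeg deg w = a + b"
    using wdeg_take_drop[of deg i w] by simp
qed

lemma br_mul:
  assumes "homog deg a x" "homog deg b y"
  shows "br deg x y = mul x y - smul (ksign (a * b)) (mul y x)"
proof
  fix w
  have "br deg x y w
      = (\<Sum>i\<le>length w. x (take i w) * y (drop i w) - ksign (a * b) * (y (take i w) * x (drop i w)))"
    unfolding br_apply
  proof (intro sum.cong refl)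
    fix i
    have "y (take i w) * x (drop i w) \<noteq> 0 \<Longrightarrow> wdeg deg (take i w) = b \<and> wdeg deg (drop i w) = a"
      using assms by (auto simp: homog_def)
    then show "x (take i w) * y (drop i w)
        - ksign (wdeg deg (take i w) * wdeg deg (drop i w)) * y (take i w) * x (drop i w)
      = x (take i w) * y (drop i w) - ksign (a * b) * (y (take i w) * x (drop i w))"
      by (cases "y (take i w) * x (drop i w) = 0") (auto simp: mult.commute)
  qed
  also have "\<dots> = (mul x y - smul (ksign (a * b)) (mul y x)) w"
    by (simp add: mul_apply sum_subtractf sum_distrib_left)
  finally show "br deg x y w = (mul x y - smul (ksign (a * b)) (mul y x)) w" .
qed

lemma homog_br:
  assumes "homog deg a x" "homog deg b y"
  shows "homog deg (a + b) (br deg x y)"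
  unfolding br_mul[OF assms]
  using homog_mul[OF assms] homog_mul[OF assms(2,1)]
  by (intro homog_diff homog_smul) (simp_all add: add.commute)

lemma br_br_mul:
  assumes "homog deg a x" "homog deg b y" "homog deg c z"
  shows "br deg x (br deg y z) =
     mul x (mul y z) - smul (ksign (b * c)) (mul x (mul z y))
     - smul (ksign (a * (b + c))) (mul (mul y z) x)
     + smul (ksign (a * (b + c)) * ksign (b * c)) (mul (mul z y) x)"
  unfolding br_mul[OF assms(1) homog_br[OF assms(2,3)]] unfolding br_mul[OF assms(2,3)]
  by (simp add: mul_linear smul_smul fun_eq_iff algebra_simps)

lemma jacobi:
  assumes x: "homog deg a x" and y: "homog deg b y" and z: "homog deg c z"
  shows "br deg x (br deg y z)
    = br deg (br deg x y) z + smul (ksign (a * b)) (br deg y (br deg x z))"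
proof -
  define P where "P = ksign (a * b)"
  define Q where "Q = ksign (a * c)"
  define S where "S = ksign (b * c)"
  have signs: "ksign (a * (b + c)) = P * Q" "ksign ((a + b) * c) = Q * S"
    "ksign (b * (a + c)) = P * S" "P * P = 1" "Q * Q = 1" "S * S = 1"
    by (simp_all add: P_def Q_def S_def ring_distribs ksign_add ksign_mult_self mult.commute)
  have "br deg (br deg x y) z =
     mul (mul x y) z - smul P (mul (mul y x) z)
     - smul (Q * S) (mul z (mul x y)) + smul (Q * S * P) (mul z (mul y x))"
    unfolding br_mul[OF homog_br[OF x y] z] unfolding br_mul[OF x y] signs(2)[symmetric] P_def
    by (simp add: mul_linear smul_smul fun_eq_iff algebra_simps)
  then show ?thesis
    unfolding br_br_mul[OF x y z] br_br_mul[OF y x z] signs mul_assoc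
      P_def[symmetric] Q_def[symmetric] S_def[symmetric]
    by (simp add: fun_eq_iff algebra_simps) (simp add: mult.assoc[symmetric] signs)
qed

section \<open>Closure of the completed free Lie algebra under the bracket\<close>

definition Vhom :: "('b \<Rightarrow> int) \<Rightarrow> 'b tens set" where
  "Vhom deg = {v \<in> Vsp deg. \<exists>a. homog deg a v}"

definition hom_brackets :: "('b \<Rightarrow> int) \<Rightarrow> nat \<Rightarrow> 'b tens set" where
  "hom_brackets deg n = {rbr deg vs | vs. length vs = n \<and> set vs \<subseteq> Vhom deg}"

lemma rbr_homog: "set vs \<subseteq> Vhom deg \<Longrightarrow> \<exists>c. homog deg c (rbr deg vs)"
proof (induction deg vs rule: rbr.induct)
  case (3 deg v w vs)
  then obtain a c where "homog deg a v" "homog deg c (rbr deg (w # vs))"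
    by (auto simp: Vhom_def)
  then show ?case
    using homog_br by fastforce
qed (auto simp: Vhom_def)

lemma degcomp_Vhom: "v \<in> Vsp deg \<Longrightarrow> degcomp deg v a \<in> Vhom deg"
  by (auto simp: Vhom_def Vsp_degcomp intro: homog_degcomp)

lemma br_Vhom_hom_brackets:
  assumes u: "u \<in> Vhom deg" and z: "z \<in> lspan (hom_brackets deg n)" and n: "n \<noteq> 0"
  shows "br deg u z \<in> lspan (hom_brackets deg (Suc n))"
proof (rule lspan_mono)
  show "br deg u z \<in> lspan (br deg u ` hom_brackets deg n)"
    using z by (rule lspan_br_right)
  show "br deg u ` hom_brackets deg n \<subseteq> hom_brackets deg (Suc n)"
  proof
    fix y assume "y \<in> br deg u ` hom_brackets deg n"
    then obtain us where us: "length us = n" "set us \<subseteq> Vhom deg" and y: "y = br deg u (rbr deg us)"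
      unfolding hom_brackets_def by blast
    then have "y = rbr deg (u # us)"
      using n by (auto simp: rbr_Cons)
    then show "y \<in> hom_brackets deg (Suc n)"
      unfolding hom_brackets_def using us u by (intro CollectI exI[of _ "u # us"]) auto
  qed
qed

lemma rbr_hom_brackets: "set vs \<subseteq> Vsp deg \<Longrightarrow> rbr deg vs \<in> lspan (hom_brackets deg (length vs))"
proof (induction deg vs rule: rbr.induct)
  case (1 deg)
  then show ?case by (metis lspan_zero rbr.simps(1))
next
  case (2 deg v)
  then have v: "v \<in> Vsp deg"
    by simp
  have "degcomp deg v a \<in> hom_brackets deg 1" for a
    unfolding hom_brackets_def using degcomp_Vhom[OF v]
    by (intro CollectI exI[of _ "[degcomp deg v a]"]) auto
  then have "(\<Sum>a\<in>degs deg v. degcomp deg v a) \<in> lspan (hom_brackets deg 1)"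
    by (auto intro: lspan_sum lspan_base)
  then show ?case
    using degcomp_decomp[of deg v] v by (simp add: Vsp_def TT_def)
next
  case (3 deg v w vs)
  let ?R = "rbr deg (w # vs)"
  have v: "v \<in> Vsp deg" and R: "?R \<in> lspan (hom_brackets deg (length (w # vs)))"
    using 3 by simp_all
  have "rbr deg (v # w # vs) = br deg (\<Sum>a\<in>degs deg v. degcomp deg v a) ?R"
    using degcomp_decomp[of deg v] v by (simp add: Vsp_def TT_def)
  also have "\<dots> = (\<Sum>a\<in>degs deg v. br deg (degcomp deg v a) ?R)"
    by (rule br_sum_left)
  also have "\<dots> \<in> lspan (hom_brackets deg (length (v # w # vs)))"
    using br_Vhom_hom_brackets[OF degcomp_Vhom[OF v] R] by (auto intro: lspan_sum)
  finally show ?case .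
qed

lemma Ln_hom_brackets: "z \<in> Ln deg n \<Longrightarrow> z \<in> lspan (hom_brackets deg n)"
  unfolding Ln_def by (erule lspan_subset) (auto intro: rbr_hom_brackets)

lemma hom_brackets_Ln: "hom_brackets deg n \<subseteq> Ln deg n"
  unfolding hom_brackets_def Ln_def Vhom_def by (blast intro: lspan_base)

text \<open>Bracketing two right-normed brackets is reduced, by the Jacobi identity, to
  bracketing with a single generator.\<close>

lemma br_rbr_rbr:
  "us \<noteq> [] \<Longrightarrow> vs \<noteq> [] \<Longrightarrow> set us \<subseteq> Vhom deg \<Longrightarrow> set vs \<subseteq> Vhom deg \<Longrightarrow>
   br deg (rbr deg us) (rbr deg vs) \<in> lspan (hom_brackets deg (length us + length vs))"
proof (induction us arbitrary: vs)
  case (Cons u us')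
  show ?case
  proof (cases "us' = []")
    case True
    then have "br deg (rbr deg (u # us')) (rbr deg vs) = rbr deg (u # vs)"
      using Cons by (simp add: rbr_Cons)
    then show ?thesis
      using Cons True unfolding hom_brackets_def
      by (intro lspan_base CollectI exI[of _ "u # vs"]) auto
  next
    case False
    let ?U = "rbr deg us'" and ?V = "rbr deg vs"
    have u: "u \<in> Vhom deg" and us': "set us' \<subseteq> Vhom deg"
      using Cons by auto
    obtain a b c where "homog deg a u" "homog deg b ?U" "homog deg c ?V"
      using u rbr_homog[OF us'] rbr_homog[OF Cons.prems(4)] by (auto simp: Vhom_def)
    then have "br deg u (br deg ?U ?V)
        = br deg (br deg u ?U) ?V + smul (ksign (a * b)) (br deg ?U (br deg u ?V))"
      by (rule jacobi)
    then have "br deg (rbr deg (u # us')) ?V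
        = br deg u (br deg ?U ?V) - smul (ksign (a * b)) (br deg ?U (br deg u ?V))"
      using False by (simp add: rbr_Cons)
    moreover have "br deg u (br deg ?U ?V) \<in> lspan (hom_brackets deg (length (u # us') + length vs))"
      using br_Vhom_hom_brackets[OF u Cons.IH] False Cons.prems us' by simp
    moreover have "br deg ?U (br deg u ?V) \<in> lspan (hom_brackets deg (length (u # us') + length vs))"
      using Cons.IH[of "u # vs"] False Cons.prems us' by (simp add: rbr_Cons)
    ultimately show ?thesis
      by (metis lspan_diff lspan_smul length_Cons)
  qed
qed simp

lemma Ln_br: "z1 \<in> Ln deg a \<Longrightarrow> z2 \<in> Ln deg b \<Longrightarrow> br deg z1 z2 \<in> Ln deg (a + b)"
proof -
  assume "z1 \<in> Ln deg a" "z2 \<in> Ln deg b"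
  then have "br deg z1 z2 \<in> lspan (hom_brackets deg (a + b))"
  proof (rule lspan_br[OF Ln_hom_brackets Ln_hom_brackets])
    fix g1 g2 assume "g1 \<in> hom_brackets deg a" "g2 \<in> hom_brackets deg b"
    then obtain us vs where "g1 = rbr deg us" "length us = a" "set us \<subseteq> Vhom deg"
      and "g2 = rbr deg vs" "length vs = b" "set vs \<subseteq> Vhom deg"
      unfolding hom_brackets_def by blast
    then show "br deg g1 g2 \<in> lspan (hom_brackets deg (a + b))"
      by (cases "us = [] \<or> vs = []") (auto simp: lspan_zero br_rbr_rbr)
  qed
  then show ?thesis
    using hom_brackets_Ln unfolding Ln_def by (blast intro: lspan_subset)
qed

lemma finite_support_sum:
  "(\<forall>i\<in>S. finite {w. f i w \<noteq> 0}) \<Longrightarrow> finite {w. (\<Sum>i\<in>S. f i) w \<noteq> (0::rat)}"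
proof (cases "finite S")
  case True
  assume "\<forall>i\<in>S. finite {w. f i w \<noteq> 0}"
  moreover have "{w. (\<Sum>i\<in>S. f i) w \<noteq> 0} \<subseteq> (\<Union>i\<in>S. {w. f i w \<noteq> 0})"
    by (auto simp: sum_fun_apply intro: ccontr dest: sum.neutral)
  ultimately show ?thesis
    using True by (auto intro: finite_subset)
qed simp

lemma TT_br:
  assumes x: "x \<in> TT deg" and y: "y \<in> TT deg"
  shows "br deg x y \<in> TT deg"
proof -
  have "finite ((\<lambda>(a, b). a + b) ` (degs deg x \<times> degs deg y))"
    using x y by (simp add: TT_def)
  then have degs_fin: "finite (degs deg (br deg x y))"
    using degs_br_subset by (rule finite_subset[rotated])
  have lencomp_support: "{w. lencomp z n w \<noteq> 0} = {w. length w = n \<and> z w \<noteq> 0}" for z :: "'b tens" and n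
    by (auto simp: lencomp_apply)
  have "finite {w. lencomp (br deg x y) n w \<noteq> 0}" for n
    unfolding lencomp_br
    using x y by (intro finite_support_sum ballI finite_support_br) (simp_all add: lencomp_support TT_def)
  then have "finite {w. length w = n \<and> br deg x y w \<noteq> 0}" for n
    by (simp add: lencomp_support)
  with degs_fin show ?thesis
    by (simp add: TT_def)
qed

lemma Lhat_br:
  assumes x: "x \<in> Lhat deg" and y: "y \<in> Lhat deg"
  shows "br deg x y \<in> Lhat deg"
proof -
  have "br deg (lencomp x a) (lencomp y (n - a)) \<in> Ln deg n" if "a \<le> n" for a n
    using Ln_br[of "lencomp x a" deg a "lencomp y (n - a)" "n - a"] x y that by (simp add: Lhat_def)
  then have "lencomp (br deg x y) n \<in> Ln deg n" for n
    unfolding lencomp_br Ln_def by (auto intro: lspan_sum)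
  then show ?thesis
    using x y by (simp add: Lhat_def TT_br)
qed

section \<open>Derivations\<close>

context
  fixes deg :: "'b \<Rightarrow> int" and k :: int and \<theta> :: "'b tens \<Rightarrow> 'b tens"
  assumes der: "is_der deg k \<theta>"
begin

lemma der_outside: "x \<notin> Lhat deg \<Longrightarrow> \<theta> x = 0"
  using der by (simp add: is_der_def)

lemma der_Lhat: "x \<in> Lhat deg \<Longrightarrow> \<theta> x \<in> Lhat deg"
  using der by (simp add: is_der_def)

lemma der_add: "x \<in> Lhat deg \<Longrightarrow> y \<in> Lhat deg \<Longrightarrow> \<theta> (x + y) = \<theta> x + \<theta> y"
  using der by (simp add: is_der_def)

lemma der_smul: "x \<in> Lhat deg \<Longrightarrow> \<theta> (smul c x) = smul c (\<theta> x)"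
  using der by (simp add: is_der_def)

lemma der_homog: "x \<in> Lhat deg \<Longrightarrow> homog deg j x \<Longrightarrow> homog deg (j + k) (\<theta> x)"
  using der by (simp add: is_der_def)

lemma der_br: "x \<in> Lhat deg \<Longrightarrow> y \<in> Lhat deg \<Longrightarrow> homog deg j x \<Longrightarrow>
    \<theta> (br deg x y) = br deg (\<theta> x) y + smul (ksign (k * j)) (br deg x (\<theta> y))"
  using der by (simp add: is_der_def)

lemma der_zero: "\<theta> 0 = 0"
  using der_smul[OF Lhat_zero, of 0] by (simp add: fun_eq_iff)

lemma der_sum: "(\<forall>i\<in>S. f i \<in> Lhat deg) \<Longrightarrow> \<theta> (\<Sum>i\<in>S. f i) = (\<Sum>i\<in>S. \<theta> (f i))"
proof (induction S rule: infinite_finite_induct)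
  case (insert i F)
  then show ?case
    unfolding sum.insert[OF insert.hyps] by (subst der_add) (auto intro: Lhat_sum)
qed (simp_all add: der_zero)

lemma der_degs:
  assumes x: "x \<in> Lhat deg" and nz: "\<theta> x w \<noteq> 0"
  shows "wdeg deg w \<in> (\<lambda>j. j + k) ` degs deg x"
proof -
  have "\<theta> x = \<theta> (\<Sum>j\<in>degs deg x. degcomp deg x j)"
    using degcomp_decomp[OF Lhat_finite_degs[OF x]] by simp
  also have "\<dots> = (\<Sum>j\<in>degs deg x. \<theta> (degcomp deg x j))"
    using x by (intro der_sum) (auto intro: Lhat_degcomp)
  finally have "(\<Sum>j\<in>degs deg x. \<theta> (degcomp deg x j) w) \<noteq> 0"
    using nz by (simp add: sum_fun_apply)
  then obtain j where j: "j \<in> degs deg x" "\<theta> (degcomp deg x j) w \<noteq> 0"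
    by (meson sum.neutral)
  have "homog deg (j + k) (\<theta> (degcomp deg x j))"
    using x by (intro der_homog Lhat_degcomp homog_degcomp)
  then show ?thesis
    using j by (auto simp: homog_def)
qed

end

text \<open>Unlike plus_fun_apply, these type-restricted instances do not also rewrite the values,
  which are themselves functions on words.\<close>

lemma plus_op_apply: "((\<theta> :: 'b tens \<Rightarrow> 'b tens) + \<eta>) x = \<theta> x + \<eta> x"
  by simp

lemma minus_op_apply: "((\<theta> :: 'b tens \<Rightarrow> 'b tens) - \<eta>) x = \<theta> x - \<eta> x"
  by simp

lemma is_der_zero: "is_der deg k (\<lambda>x. 0)"
  by (simp add: is_der_def Lhat_zero)

lemma is_der_add:
  assumes \<theta>: "is_der deg k \<theta>" and \<eta>: "is_der deg k \<eta>"
  shows "is_der deg k (\<theta> + \<eta>)"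
  unfolding is_der_def
proof (intro conjI allI ballI impI)
  fix x assume "x \<notin> Lhat deg"
  then show "(\<theta> + \<eta>) x = 0"
    by (metis plus_op_apply der_outside[OF \<theta>] der_outside[OF \<eta>] add_0)
next
  fix x assume "x \<in> Lhat deg"
  then show "(\<theta> + \<eta>) x \<in> Lhat deg"
    unfolding plus_op_apply by (intro Lhat_add der_Lhat[OF \<theta>] der_Lhat[OF \<eta>])
next
  fix x y assume "x \<in> Lhat deg" "y \<in> Lhat deg"
  then show "(\<theta> + \<eta>) (x + y) = (\<theta> + \<eta>) x + (\<theta> + \<eta>) y"
    unfolding plus_op_apply by (simp add: der_add[OF \<theta>] der_add[OF \<eta>] ac_simps)
next
  fix c x assume "x \<in> Lhat deg"
  then show "(\<theta> + \<eta>) (smul c x) = smul c ((\<theta> + \<eta>) x)"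
    unfolding plus_op_apply by (simp add: der_smul[OF \<theta>] der_smul[OF \<eta>] smul_add)
next
  fix j x assume "x \<in> Lhat deg" "homog deg j x"
  then show "homog deg (j + k) ((\<theta> + \<eta>) x)"
    unfolding plus_op_apply by (intro homog_add der_homog[OF \<theta>] der_homog[OF \<eta>])
next
  fix j x y assume "x \<in> Lhat deg" "y \<in> Lhat deg" "homog deg j x"
  then show "(\<theta> + \<eta>) (br deg x y)
      = br deg ((\<theta> + \<eta>) x) y + smul (ksign (k * j)) (br deg x ((\<theta> + \<eta>) y))"
    unfolding plus_op_apply
    by (simp add: der_br[OF \<theta>] der_br[OF \<eta>] br_add_left br_add_right smul_add ac_simps)
qed

lemma is_der_smul:
  assumes \<theta>: "is_der deg k \<theta>"
  shows "is_der deg k (\<lambda>x. smul c (\<theta> x))"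
  unfolding is_der_def
proof (intro conjI allI ballI impI)
  fix x assume "x \<notin> Lhat deg"
  then show "smul c (\<theta> x) = 0"
    by (simp add: der_outside[OF \<theta>])
next
  fix x assume "x \<in> Lhat deg"
  then show "smul c (\<theta> x) \<in> Lhat deg"
    by (intro Lhat_smul der_Lhat[OF \<theta>])
next
  fix x y assume "x \<in> Lhat deg" "y \<in> Lhat deg"
  then show "smul c (\<theta> (x + y)) = smul c (\<theta> x) + smul c (\<theta> y)"
    by (simp add: der_add[OF \<theta>] smul_add)
next
  fix e x assume "x \<in> Lhat deg"
  then show "smul c (\<theta> (smul e x)) = smul e (smul c (\<theta> x))"
    by (simp add: der_smul[OF \<theta>] smul_smul mult.commute)
next
  fix j x assume "x \<in> Lhat deg" "homog deg j x"
  then show "homog deg (j + k) (smul c (\<theta> x))"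
    by (intro homog_smul der_homog[OF \<theta>])
next
  fix j x y assume "x \<in> Lhat deg" "y \<in> Lhat deg" "homog deg j x"
  then show "smul c (\<theta> (br deg x y))
      = br deg (smul c (\<theta> x)) y + smul (ksign (k * j)) (br deg x (smul c (\<theta> y)))"
    by (simp add: der_br[OF \<theta>] br_smul_left br_smul_right smul_add smul_smul mult.commute)
qed

lemma fun_diff_eq_add_smul: "(\<theta> :: 'b tens \<Rightarrow> 'b tens) - \<eta> = \<theta> + (\<lambda>x. smul (-1) (\<eta> x))"
  by (simp add: fun_eq_iff)

lemma is_der_diff: "is_der deg k \<theta> \<Longrightarrow> is_der deg k \<eta> \<Longrightarrow> is_der deg k (\<theta> - \<eta>)"
  unfolding fun_diff_eq_add_smul by (intro is_der_add is_der_smul)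

lemma der_comp_br:
  assumes \<theta>: "is_der deg j \<theta>" and \<eta>: "is_der deg k \<eta>"
    and x: "x \<in> Lhat deg" and y: "y \<in> Lhat deg" and h: "homog deg a x"
  shows "\<theta> (\<eta> (br deg x y)) = br deg (\<theta> (\<eta> x)) y
      + smul (ksign (j * (a + k))) (br deg (\<eta> x) (\<theta> y))
      + smul (ksign (k * a)) (br deg (\<theta> x) (\<eta> y) + smul (ksign (j * a)) (br deg x (\<theta> (\<eta> y))))"
proof -
  have \<eta>x: "\<eta> x \<in> Lhat deg" "homog deg (a + k) (\<eta> x)" and \<eta>y: "\<eta> y \<in> Lhat deg"
    using x y h by (simp_all add: der_Lhat[OF \<eta>] der_homog[OF \<eta>])
  have "\<theta> (\<eta> (br deg x y)) = \<theta> (br deg (\<eta> x) y + smul (ksign (k * a)) (br deg x (\<eta> y)))"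
    by (simp add: der_br[OF \<eta> x y h])
  also have "\<dots> = \<theta> (br deg (\<eta> x) y) + smul (ksign (k * a)) (\<theta> (br deg x (\<eta> y)))"
    using x y \<eta>x \<eta>y by (simp add: der_add[OF \<theta>] der_smul[OF \<theta>] Lhat_br Lhat_smul)
  finally show ?thesis
    using x y h \<eta>x \<eta>y by (simp add: der_br[OF \<theta>])
qed

lemma dbr_br:
  assumes \<theta>: "is_der deg j \<theta>" and \<eta>: "is_der deg k \<eta>"
    and x: "x \<in> Lhat deg" and y: "y \<in> Lhat deg" and h: "homog deg a x"
  shows "dbr j k \<theta> \<eta> (br deg x y)
    = br deg (dbr j k \<theta> \<eta> x) y + smul (ksign ((j + k) * a)) (br deg x (dbr j k \<theta> \<eta> y))"
proof -
  define P where "P = ksign (j * a)"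
  define Q where "Q = ksign (k * a)"
  define R where "R = ksign (j * k)"
  have signs: "ksign (j * (a + k)) = P * R" "ksign (k * (a + j)) = Q * R"
    "ksign ((j + k) * a) = P * Q" "R * R = 1"
    by (simp_all add: P_def Q_def R_def ring_distribs ksign_add ksign_mult_self mult.commute)
  show ?thesis
    unfolding dbr_def der_comp_br[OF \<theta> \<eta> x y h] der_comp_br[OF \<eta> \<theta> x y h]
      br_diff_left br_diff_right br_smul_left br_smul_right signs
      P_def[symmetric] Q_def[symmetric] R_def[symmetric]
    by (simp add: fun_eq_iff algebra_simps) (simp add: mult.assoc[symmetric] signs)
qed

lemma is_der_dbr:
  assumes \<theta>: "is_der deg j \<theta>" and \<eta>: "is_der deg k \<eta>"
  shows "is_der deg (j + k) (dbr j k \<theta> \<eta>)"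
  unfolding is_der_def
proof (intro conjI allI ballI impI)
  fix x assume "x \<notin> Lhat deg"
  then show "dbr j k \<theta> \<eta> x = 0"
    by (simp add: dbr_def der_outside[OF \<theta>] der_outside[OF \<eta>] der_zero[OF \<theta>] der_zero[OF \<eta>])
next
  fix x assume "x \<in> Lhat deg"
  then show "dbr j k \<theta> \<eta> x \<in> Lhat deg"
    unfolding dbr_def by (intro Lhat_diff Lhat_smul der_Lhat[OF \<theta>] der_Lhat[OF \<eta>])
next
  fix x y assume "x \<in> Lhat deg" "y \<in> Lhat deg"
  then show "dbr j k \<theta> \<eta> (x + y) = dbr j k \<theta> \<eta> x + dbr j k \<theta> \<eta> y"
    by (simp add: dbr_def der_add[OF \<theta>] der_add[OF \<eta>] der_Lhat[OF \<theta>] der_Lhat[OF \<eta>]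
        fun_eq_iff algebra_simps)
next
  fix c x assume "x \<in> Lhat deg"
  then show "dbr j k \<theta> \<eta> (smul c x) = smul c (dbr j k \<theta> \<eta> x)"
    by (simp add: dbr_def der_smul[OF \<theta>] der_smul[OF \<eta>] der_Lhat[OF \<theta>] der_Lhat[OF \<eta>]
        fun_eq_iff algebra_simps)
next
  fix a x assume x: "x \<in> Lhat deg" and h: "homog deg a x"
  have "homog deg (a + (j + k)) (\<theta> (\<eta> x))" "homog deg (a + (j + k)) (\<eta> (\<theta> x))"
    using der_homog[OF \<theta> der_Lhat[OF \<eta> x] der_homog[OF \<eta> x h]]
      der_homog[OF \<eta> der_Lhat[OF \<theta> x] der_homog[OF \<theta> x h]]
    by (simp_all add: ac_simps)
  then show "homog deg (a + (j + k)) (dbr j k \<theta> \<eta> x)"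
    unfolding dbr_def by (intro homog_diff homog_smul)
next
  fix a x y assume "x \<in> Lhat deg" "y \<in> Lhat deg" "homog deg a x"
  then show "dbr j k \<theta> \<eta> (br deg x y)
      = br deg (dbr j k \<theta> \<eta> x) y + smul (ksign ((j + k) * a)) (br deg x (dbr j k \<theta> \<eta> y))"
    by (rule dbr_br[OF \<theta> \<eta>])
qed

section \<open>The filtration F of the completed free Lie algebra\<close>

definition tri :: "nat \<Rightarrow> nat \<Rightarrow> nat" where
  "tri q n = (n - 1) * n * q div 2"

lemma tri_Suc: "tri q (Suc n) = tri q n + n * q"
proof (cases n)
  case (Suc m)
  have "Suc m * Suc (Suc m) * q = m * Suc m * q + 2 * (Suc m * q)"
    by (simp add: algebra_simps)
  then show ?thesis
    using Suc by (simp add: tri_def)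
qed (simp add: tri_def)

lemma tri_mono: "n \<le> n' \<Longrightarrow> tri q n \<le> tri q n'"
  by (induction n' rule: dec_induct) (auto simp: tri_Suc)

lemma tri_unique:
  assumes "tri q n + p = tri q n' + p'" "p < n * q" "p' < n' * q"
  shows "n = n' \<and> p = p'"
proof -
  have "\<not> n < n'" if "tri q n + p = tri q n' + p'" "p < n * q" for n n' p p'
  proof
    assume "n < n'"
    then have "tri q (Suc n) \<le> tri q n'"
      by (intro tri_mono) simp
    then show False
      using that by (simp add: tri_Suc)
  qed
  then have "n = n'"
    using assms by (metis linorder_neqE_nat)
  then show ?thesis
    using assms by simp
qed

lemma tri_exists:
  assumes "q \<ge> 1" "t \<ge> 1"
  shows "\<exists>n p. 1 \<le> n \<and> p < n * q \<and> t = tri q n + p + 1"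
  using assms(2)
proof (induction t rule: dec_induct)
  case base
  then show ?case
    using assms(1) by (intro exI[of _ 1] exI[of _ 0]) (auto simp: tri_def)
next
  case (step t)
  then obtain n p where np: "1 \<le> n" "p < n * q" "t = tri q n + p + 1"
    by blast
  show ?case
  proof (cases "Suc p < n * q")
    case True
    then show ?thesis
      using np by (intro exI[of _ n] exI[of _ "Suc p"]) auto
  next
    case False
    then have "Suc p = n * q"
      using np by simp
    then show ?thesis
      using np assms(1) by (intro exI[of _ "Suc n"] exI[of _ 0]) (auto simp: tri_Suc)
  qed
qed

lemma Ffilt_eq:
  assumes "1 \<le> n" "p < n * q"
  shows "Ffilt deg Vf q (tri q n + p + 1) = Fnp deg Vf q n p"
proof -
  have "(\<exists>n' p'. 1 \<le> n' \<and> p' < n' * q \<and> tri q n + p = tri q n' + p' \<and> x \<in> Fnp deg Vf q n' p')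
      \<longleftrightarrow> x \<in> Fnp deg Vf q n p" for x
    using tri_unique[OF _ assms(2)] assms by blast
  then show ?thesis
    by (simp add: Ffilt_def tri_def)
qed

lemma Ffilt_elim:
  assumes "x \<in> Ffilt deg Vf q t"
  obtains n p where "1 \<le> n" "p < n * q" "t = tri q n + p + 1" "x \<in> Fnp deg Vf q n p"
  using assms by (auto simp: Ffilt_def tri_def)

definition Lnp_gens :: "('b \<Rightarrow> int) \<Rightarrow> (nat \<Rightarrow> 'b tens set) \<Rightarrow> nat \<Rightarrow> nat \<Rightarrow> nat \<Rightarrow> 'b tens set" where
  "Lnp_gens deg Vf q n p = {rbr deg vs | vs. length vs = n \<and>
      (\<exists>as. length as = n \<and> (\<forall>i<n. as ! i \<le> q \<and> vs ! i \<in> Vf (as ! i)) \<and> sum_list as = p)}"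

lemma Lnp_eq: "Lnp deg Vf q n p = lspan (Lnp_gens deg Vf q n p)"
  by (simp add: Lnp_def Lnp_gens_def)

locale V_filtration =
  fixes deg :: "'b \<Rightarrow> int" and Vf :: "nat \<Rightarrow> 'b tens set" and q :: nat
  assumes Vf0: "Vf 0 = Vsp deg"
    and Vf_dec: "\<forall>\<alpha><q. Vf (Suc \<alpha>) \<subseteq> Vf \<alpha>"
    and Vfq: "Vf q = {0}"
    and Vf_graded: "\<forall>\<alpha>\<le>q. graded_subspace_V deg (Vf \<alpha>)"
begin

text \<open>V contains the nonzero element dual to a one-letter word, so the filtration has
  positive length.\<close>

lemma length_pos: "q \<ge> 1"
proof (rule ccontr)
  assume "\<not> q \<ge> 1"
  then have "Vsp deg = {0}"
    using Vf0 Vfq by (simp add: le_simps)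
  define e :: "'b tens" where "e = (\<lambda>w. if w = [undefined] then 1 else 0)"
  have "{w. e w \<noteq> 0} = {[undefined]}"
    by (auto simp: e_def)
  then have "e \<in> Vsp deg"
    using TT_finite_support[of e deg] by (auto simp: Vsp_def e_def)
  moreover have "e \<noteq> 0"
    by (auto simp: e_def fun_eq_iff)
  ultimately show False
    using \<open>Vsp deg = {0}\<close> by simp
qed

lemma Vf_Vsp: "\<alpha> \<le> q \<Longrightarrow> x \<in> Vf \<alpha> \<Longrightarrow> x \<in> Vsp deg"
  using Vf_graded by (auto simp: graded_subspace_V_def)

lemma Vf_degcomp: "\<alpha> \<le> q \<Longrightarrow> x \<in> Vf \<alpha> \<Longrightarrow> degcomp deg x k \<in> Vf \<alpha>"
  using Vf_graded by (auto simp: graded_subspace_V_def)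

lemma Lnp_gens_elim:
  assumes "g \<in> Lnp_gens deg Vf q n p"
  obtains vs where "g = rbr deg vs" "length vs = n" "set vs \<subseteq> Vsp deg"
proof -
  from assms obtain vs as where g: "g = rbr deg vs" "length vs = n"
      "\<forall>i<n. as ! i \<le> q \<and> vs ! i \<in> Vf (as ! i)"
    unfolding Lnp_gens_def by blast
  then have "set vs \<subseteq> Vsp deg"
    using Vf_Vsp by (metis in_set_conv_nth subsetI)
  then show ?thesis
    using g that by blast
qed

lemma Lnp_degcomp: "z \<in> Lnp deg Vf q n p \<Longrightarrow> degcomp deg z k \<in> Lnp deg Vf q n p"
  unfolding Lnp_eq
proof (erule lspan_degcomp)
  fix g assume "g \<in> Lnp_gens deg Vf q n p"
  then obtain vs as where g: "g = rbr deg vs" "length vs = n" "length as = n"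
      "\<forall>i<n. as ! i \<le> q \<and> vs ! i \<in> Vf (as ! i)" "sum_list as = p"
    unfolding Lnp_gens_def by blast
  have "degcomp deg g k \<in> lspan (degcomp_brackets deg vs)"
    using g Vf_Vsp Vsp_TT by (metis degcomp_rbr in_set_conv_nth subsetI)
  moreover have "degcomp_brackets deg vs \<subseteq> Lnp_gens deg Vf q n p"
  proof
    fix z assume "z \<in> degcomp_brackets deg vs"
    then obtain us where us: "z = rbr deg us" "length us = length vs"
        "\<forall>i<length vs. \<exists>a. us ! i = degcomp deg (vs ! i) a"
      unfolding degcomp_brackets_def by blast
    then have "\<forall>i<n. as ! i \<le> q \<and> us ! i \<in> Vf (as ! i)"
      using g Vf_degcomp by metis
    then show "z \<in> Lnp_gens deg Vf q n p"
      unfolding Lnp_gens_def using us g by blast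
  qed
  ultimately show "degcomp deg g k \<in> lspan (Lnp_gens deg Vf q n p)"
    by (rule lspan_mono)
qed

lemma Lnp_gens_Suc: "Lnp_gens deg Vf q n (Suc p) \<subseteq> Lnp_gens deg Vf q n p"
proof
  fix g assume "g \<in> Lnp_gens deg Vf q n (Suc p)"
  then obtain vs as where g: "g = rbr deg vs" "length vs = n" "length as = n"
      "\<forall>i<n. as ! i \<le> q \<and> vs ! i \<in> Vf (as ! i)" "sum_list as = Suc p"
    unfolding Lnp_gens_def by blast
  obtain i where i: "i < n" "as ! i \<noteq> 0"
    using g(3,5) by (metis in_set_conv_nth sum_list_eq_0_iff nat.simps(3))
  define as' where "as' = as[i := as ! i - 1]"
  have "Vf (as ! i) \<subseteq> Vf (as ! i - 1)"
    using Vf_dec g(4) i by (metis Suc_pred' bot_nat_0.not_eq_extremum less_eq_Suc_le less_le_trans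
        lessI)
  then have "\<forall>j<n. as' ! j \<le> q \<and> vs ! j \<in> Vf (as' ! j)"
    using g(3,4) i by (auto simp: as'_def nth_list_update)
  moreover have "length as' = n" "sum_list as' = p"
    using i g by (simp_all add: as'_def sum_list_update)
  ultimately show "g \<in> Lnp_gens deg Vf q n p"
    unfolding Lnp_gens_def using g by blast
qed

lemma Lnp_Suc: "z \<in> Lnp deg Vf q n (Suc p) \<Longrightarrow> z \<in> Lnp deg Vf q n p"
  unfolding Lnp_eq by (erule lspan_mono) (rule Lnp_gens_Suc)

lemma Ln1_Lnp: "z \<in> Ln deg 1 \<Longrightarrow> z \<in> Lnp deg Vf q 1 0"
  unfolding Lnp_eq Ln_def
proof (erule lspan_mono, clarify)
  fix vs :: "'b tens list" assume vs: "length vs = 1" "set vs \<subseteq> Vsp deg"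
  then obtain v where "vs = [v]"
    by (metis One_nat_def length_0_conv length_Suc_conv)
  then show "rbr deg vs \<in> Lnp_gens deg Vf q 1 0"
    unfolding Lnp_gens_def using vs Vf0 by (intro CollectI exI[of _ vs] conjI exI[of _ "[0]"]) auto
qed

lemma Fnp_Lhat: "x \<in> Fnp deg Vf q n p \<Longrightarrow> x \<in> Lhat deg"
  by (simp add: Fnp_def)

lemma Fnp_zero: "0 \<in> Fnp deg Vf q n p"
  by (simp add: Fnp_def Lhat_zero Lnp_def lspan_zero)

lemma Fnp_add: "x \<in> Fnp deg Vf q n p \<Longrightarrow> y \<in> Fnp deg Vf q n p \<Longrightarrow> x + y \<in> Fnp deg Vf q n p"
  by (auto simp: Fnp_def Lhat_add lencomp_add Lnp_def intro: lspan_add)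

lemma Fnp_smul: "x \<in> Fnp deg Vf q n p \<Longrightarrow> smul c x \<in> Fnp deg Vf q n p"
  by (auto simp: Fnp_def Lhat_smul lencomp_smul Lnp_def intro: lspan_smul)

lemma Fnp_degcomp: "x \<in> Fnp deg Vf q n p \<Longrightarrow> degcomp deg x k \<in> Fnp deg Vf q n p"
  by (auto simp: Fnp_def Lhat_degcomp degcomp_lencomp[symmetric] Lnp_degcomp degcomp_apply)

lemma Fnp_Suc: "x \<in> Fnp deg Vf q n (Suc p) \<Longrightarrow> x \<in> Fnp deg Vf q n p"
  by (auto simp: Fnp_def Lnp_Suc)

lemma Fnp_Suc_length: "x \<in> Fnp deg Vf q (Suc n) 0 \<Longrightarrow> x \<in> Fnp deg Vf q n p"
proof -
  assume x: "x \<in> Fnp deg Vf q (Suc n) 0"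
  then have "lencomp x n = 0"
    by (auto simp: Fnp_def fun_eq_iff lencomp_apply)
  then show ?thesis
    using x by (auto simp: Fnp_def Lnp_def lspan_zero)
qed

lemma Ffilt_is_Fnp:
  assumes "t \<ge> 1"
  obtains n p where "1 \<le> n" "p < n * q" "t = tri q n + p + 1" "Ffilt deg Vf q t = Fnp deg Vf q n p"
  using tri_exists[OF length_pos assms] Ffilt_eq by blast

lemma Ffilt_pos: "x \<in> Ffilt deg Vf q t \<Longrightarrow> t \<ge> 1"
  by (auto elim: Ffilt_elim)

lemma Ffilt_Lhat: "x \<in> Ffilt deg Vf q t \<Longrightarrow> x \<in> Lhat deg"
  by (auto elim: Ffilt_elim simp: Fnp_Lhat)

lemma Ffilt_zero: "t \<ge> 1 \<Longrightarrow> 0 \<in> Ffilt deg Vf q t"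
  by (metis Ffilt_is_Fnp Fnp_zero)

lemma Ffilt_add: "x \<in> Ffilt deg Vf q t \<Longrightarrow> y \<in> Ffilt deg Vf q t \<Longrightarrow> x + y \<in> Ffilt deg Vf q t"
  by (metis Ffilt_is_Fnp Ffilt_pos Fnp_add)

lemma Ffilt_smul: "x \<in> Ffilt deg Vf q t \<Longrightarrow> smul c x \<in> Ffilt deg Vf q t"
  by (metis Ffilt_is_Fnp Ffilt_pos Fnp_smul)

lemma Ffilt_diff: "x \<in> Ffilt deg Vf q t \<Longrightarrow> y \<in> Ffilt deg Vf q t \<Longrightarrow> x - y \<in> Ffilt deg Vf q t"
  unfolding diff_eq_add_smul by (intro Ffilt_add Ffilt_smul)

lemma Ffilt_degcomp: "x \<in> Ffilt deg Vf q t \<Longrightarrow> degcomp deg x k \<in> Ffilt deg Vf q t"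
  by (metis Ffilt_is_Fnp Ffilt_pos Fnp_degcomp)

lemma Ffilt_sum: "t \<ge> 1 \<Longrightarrow> (\<forall>i\<in>S. f i \<in> Ffilt deg Vf q t) \<Longrightarrow> (\<Sum>i\<in>S. f i) \<in> Ffilt deg Vf q t"
proof (induction S rule: infinite_finite_induct)
  case (insert i F)
  then show ?case
    unfolding sum.insert[OF insert.hyps] by (intro Ffilt_add) auto
qed (metis sum.infinite sum.empty Ffilt_zero)+

lemma Ffilt_Suc: "t \<ge> 1 \<Longrightarrow> Ffilt deg Vf q (Suc t) \<subseteq> Ffilt deg Vf q t"
proof
  fix x assume t: "t \<ge> 1" and x: "x \<in> Ffilt deg Vf q (Suc t)"
  from x obtain n p where np: "1 \<le> n" "p < n * q" "Suc t = tri q n + p + 1" "x \<in> Fnp deg Vf q n p"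
    by (rule Ffilt_elim)
  show "x \<in> Ffilt deg Vf q t"
  proof (cases p)
    case (Suc p')
    then have "Ffilt deg Vf q t = Fnp deg Vf q n p'"
      using np Ffilt_eq[of n p' q deg Vf] by simp
    then show ?thesis
      using np Suc Fnp_Suc by simp
  next
    case 0
    then have "n \<noteq> 1"
      using np t by (auto simp: tri_def)
    then obtain m where m: "n = Suc m" "m \<ge> 1"
      using np by (cases n) auto
    then have "m * q \<ge> 1"
      using length_pos by simp
    then have "Ffilt deg Vf q t = Fnp deg Vf q m (m * q - 1)"
      using Ffilt_eq[of m "m * q - 1" q deg Vf] np 0 m by (simp add: tri_Suc)
    then show ?thesis
      using np 0 m Fnp_Suc_length by simp
  qed
qed

lemma Ffilt_antimono:
  assumes "1 \<le> t" "t \<le> t'"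
  shows "Ffilt deg Vf q t' \<subseteq> Ffilt deg Vf q t"
  using assms(2)
proof (induction t' rule: dec_induct)
  case (step m)
  then show ?case
    using Ffilt_Suc[of m] assms(1) by auto
qed simp

lemma Lhat_Ffilt1: "x \<in> Lhat deg \<Longrightarrow> x \<in> Ffilt deg Vf q 1"
proof -
  assume x: "x \<in> Lhat deg"
  have "Ffilt deg Vf q 1 = Fnp deg Vf q 1 0"
    using Ffilt_eq[of 1 0 q deg Vf] length_pos by (simp add: tri_def)
  moreover have "lencomp x 1 \<in> Lnp deg Vf q 1 0"
    using x by (intro Ln1_Lnp) (simp add: Lhat_def)
  ultimately show ?thesis
    using x Lhat_empty_word by (auto simp: Fnp_def)
qed

lemma Ffilt_vanish:
  assumes "x \<in> Ffilt deg Vf q t" "tri q (Suc L) < t" "length w \<le> L"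
  shows "x w = 0"
proof -
  from assms(1) obtain n p where np: "1 \<le> n" "p < n * q" "t = tri q n + p + 1" "x \<in> Fnp deg Vf q n p"
    by (rule Ffilt_elim)
  have "t \<le> tri q (Suc n)"
    using np by (simp add: tri_Suc)
  then have "\<not> Suc n \<le> Suc L"
    using assms(2) tri_mono[of "Suc n" "Suc L" q] by auto
  then show ?thesis
    using np assms(3) by (simp add: Fnp_def)
qed

lemma Ffilt_limit:
  assumes y: "y \<in> Lhat deg" and t: "t \<ge> 1"
    and approx: "\<And>L. \<exists>z\<in>Ffilt deg Vf q t. \<forall>w. length w \<le> L \<longrightarrow> y w = z w"
  shows "y \<in> Ffilt deg Vf q t"
proof -
  obtain n p where np: "Ffilt deg Vf q t = Fnp deg Vf q n p"
    using Ffilt_is_Fnp[OF t] by metis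
  obtain z where z: "z \<in> Fnp deg Vf q n p" "\<forall>w. length w \<le> n \<longrightarrow> y w = z w"
    using approx[of n] np by auto
  have "lencomp y n = lencomp z n"
    using z by (auto simp: fun_eq_iff lencomp_apply)
  then have "y \<in> Fnp deg Vf q n p"
    using z y by (auto simp: Fnp_def)
  then show ?thesis
    using np by simp
qed

end

section \<open>A minimal differential preserves F\<close>

lemma lspan_Lhat: "z \<in> lspan G \<Longrightarrow> G \<subseteq> Lhat deg \<Longrightarrow> z \<in> Lhat deg"
  by (induction z rule: lspan.induct) (auto intro: Lhat_zero Lhat_add Lhat_smul)

locale minimal_differential = V_filtration deg Vf q for deg :: "'b \<Rightarrow> int" and Vf q +
  fixes d :: "'b tens \<Rightarrow> 'b tens"
  assumes d_der: "is_der deg (-1) d"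
    and d_filt: "\<forall>n. \<forall>x\<in>Lge deg n. d x \<in> Lge deg n"
    and minimal: "\<forall>v\<in>Vsp deg. d v \<in> Lge deg 2"
begin

lemma d_br_Vsp_vanish:
  assumes v: "v \<in> Vsp deg" and R: "R \<in> Lhat deg"
    and R_vanish: "\<And>u. length u < m \<Longrightarrow> R u = 0"
    and dR_vanish: "\<And>u. length u < m + 1 \<Longrightarrow> d R u = 0"
    and short: "length w < m + 2"
  shows "d (br deg v R) w = 0"
proof -
  have va: "degcomp deg v a \<in> Vsp deg" for a
    using v by (rule Vsp_degcomp)
  have "d (br deg v R) = d (\<Sum>a\<in>degs deg v. br deg (degcomp deg v a) R)"
    using degcomp_decomp[of deg v] v by (simp add: Vsp_def TT_def flip: br_sum_left)
  also have "\<dots> = (\<Sum>a\<in>degs deg v. d (br deg (degcomp deg v a) R))"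
    by (intro der_sum[OF d_der] ballI Lhat_br[OF Vsp_Lhat[OF va] R])
  also have "\<dots> = (\<Sum>a\<in>degs deg v. br deg (d (degcomp deg v a)) R
      + smul (ksign (- 1 * a)) (br deg (degcomp deg v a) (d R)))"
    by (intro sum.cong refl der_br[OF d_der] Vsp_Lhat[OF va] R homog_degcomp)
  finally have "d (br deg v R) w = (\<Sum>a\<in>degs deg v. br deg (d (degcomp deg v a)) R w
      + ksign (- 1 * a) * br deg (degcomp deg v a) (d R) w)"
    by (simp add: sum_fun_apply)
  moreover
  have "br deg (d (degcomp deg v a)) R w = 0" for a
  proof (rule br_vanish[where m = 2 and n = m])
    show "d (degcomp deg v a) u = 0" if "length u < 2" for u
      using minimal va that by (auto simp: Lge_def)
  qed (use R_vanish short in auto)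
  moreover have "br deg (degcomp deg v a) (d R) w = 0" for a
  proof (rule br_vanish[where m = 1 and n = "m + 1"])
    show "degcomp deg v a u = 0" if "length u < 1" for u
      using Vsp_vanish[OF va] that by simp
  qed (use dR_vanish short in auto)
  ultimately show ?thesis
    by simp
qed

lemma d_rbr_vanish:
  "set vs \<subseteq> Vsp deg \<Longrightarrow> vs \<noteq> [] \<Longrightarrow> length w < length vs + 1 \<Longrightarrow> d (rbr deg vs) w = 0"
proof (induction vs arbitrary: w rule: induct_list012)
  case (2 v)
  then show ?case
    using minimal by (auto simp: Lge_def)
next
  case (3 v u vs)
  have us: "set (u # vs) \<subseteq> Vsp deg"
    using 3 by simp
  show ?case
  proof (simp only: rbr.simps, rule d_br_Vsp_vanish)
    show "rbr deg (u # vs) w' = 0" if "length w' < length (u # vs)" for w'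
      using rbr_support[OF us] that by fastforce
    show "d (rbr deg (u # vs)) w' = 0" if "length w' < length (u # vs) + 1" for w'
      using 3 that by simp
  qed (use 3 rbr_Lhat[OF us] in auto)
qed simp

lemma d_lspan_vanish:
  assumes "z \<in> lspan G" "G \<subseteq> Lhat deg" "\<And>g w. g \<in> G \<Longrightarrow> length w < m \<Longrightarrow> d g w = 0"
    and "length w < m"
  shows "d z w = 0"
  using assms(1,4)
proof (induction z arbitrary: w rule: lspan.induct)
  case lspan_zero
  then show ?case
    by (metis der_zero[OF d_der] zero_fun_apply)
next
  case (lspan_base x)
  then show ?case
    using assms(3) by blast
next
  case (lspan_add x y)
  then have "d (x + y) = d x + d y"
    using assms(2) by (intro der_add[OF d_der] lspan_Lhat)
  then show ?case
    using lspan_add by (metis plus_fun_apply add_0)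
next
  case (lspan_smul x c)
  then have "d (smul c x) = smul c (d x)"
    using assms(2) by (intro der_smul[OF d_der] lspan_Lhat)
  then show ?case
    using lspan_smul by (metis smul_apply mult_zero_right)
qed

lemma d_Fnp:
  assumes n: "1 \<le> n" and x: "x \<in> Fnp deg Vf q n p"
  shows "d x \<in> Fnp deg Vf q n p"
proof -
  let ?z = "lencomp x n"
  have xL: "x \<in> Lhat deg"
    using x by (simp add: Fnp_def)
  have zL: "?z \<in> Lhat deg"
    using xL by (rule Lhat_lencomp)
  have "x - ?z \<in> Lge deg (n + 1)"
    using x Lhat_diff[OF xL zL] by (auto simp: Lge_def Fnp_def lencomp_apply)
  then have high: "d (x - ?z) \<in> Lge deg (n + 1)"
    using d_filt by blast
  have low: "d ?z w = 0" if "length w < n + 1" for w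
  proof (rule d_lspan_vanish)
    show "?z \<in> lspan (Lnp_gens deg Vf q n p)"
      using x by (simp add: Fnp_def Lnp_eq)
    show "Lnp_gens deg Vf q n p \<subseteq> Lhat deg"
      by (auto elim!: Lnp_gens_elim intro: rbr_Lhat)
    show "d g w' = 0" if "g \<in> Lnp_gens deg Vf q n p" "length w' < n + 1" for g w'
      using that(1)
    proof (rule Lnp_gens_elim)
      fix vs assume "g = rbr deg vs" "length vs = n" "set vs \<subseteq> Vsp deg"
      moreover have "vs \<noteq> []"
        using \<open>length vs = n\<close> n by auto
      ultimately show "d g w' = 0"
        using that(2) d_rbr_vanish by simp
    qed
  qed (rule that)
  have "d x = d ?z + d (x - ?z)"
    using der_add[OF d_der zL Lhat_diff[OF xL zL]] by simp
  then have vanish: "d x w = 0" if "length w < n + 1" for w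
    using low high that by (auto simp: Lge_def)
  then have "lencomp (d x) n = 0"
    by (auto simp: fun_eq_iff lencomp_apply)
  then show ?thesis
    using der_Lhat[OF d_der xL] vanish by (auto simp: Fnp_def Lnp_eq lspan_zero)
qed

lemma d_Ffilt: "x \<in> Ffilt deg Vf q t \<Longrightarrow> d x \<in> Ffilt deg Vf q t"
  by (metis Ffilt_elim Ffilt_eq d_Fnp)

end

lemma DerL_der: "is_der deg k \<theta> \<Longrightarrow> \<theta> \<in> DerL deg"
  unfolding DerL_def by (intro CollectI exI[of _ "{k}"] exI[of _ "\<lambda>_. \<theta>"]) auto

lemma DerL_elim:
  assumes "\<theta> \<in> DerL deg"
  obtains K f where "finite K" "\<forall>k\<in>K. is_der deg k (f k)" "\<theta> = (\<lambda>x. \<Sum>k\<in>K. f k x)"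
  using assms unfolding DerL_def by blast

lemma DerL_outside:
  assumes "\<theta> \<in> DerL deg" "x \<notin> Lhat deg"
  shows "\<theta> x = 0"
proof -
  obtain K f where "finite K" "\<forall>k\<in>K. is_der deg k (f k)" "\<theta> = (\<lambda>x. \<Sum>k\<in>K. f k x)"
    using assms(1) by (rule DerL_elim)
  moreover from this have "\<forall>k\<in>K. f k x = 0"
    using assms(2) der_outside by blast
  ultimately show ?thesis
    by simp
qed

lemma DerL_zero: "0 \<in> DerL deg"
  using DerL_der[OF is_der_zero] by (simp add: zero_fun_def)

lemma is_der_if: "(k \<in> K \<Longrightarrow> is_der deg k (f k)) \<Longrightarrow> is_der deg k (\<lambda>x. if k \<in> K then f k x else 0)"
  by (cases "k \<in> K") (simp_all add: is_der_zero)

lemma DerL_add: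
  assumes "\<theta> \<in> DerL deg" "\<eta> \<in> DerL deg"
  shows "\<theta> + \<eta> \<in> DerL deg"
proof -
  obtain K1 f1 where 1: "finite K1" "\<forall>k\<in>K1. is_der deg k (f1 k)" "\<theta> = (\<lambda>x. \<Sum>k\<in>K1. f1 k x)"
    using assms(1) by (rule DerL_elim)
  obtain K2 f2 where 2: "finite K2" "\<forall>k\<in>K2. is_der deg k (f2 k)" "\<eta> = (\<lambda>x. \<Sum>k\<in>K2. f2 k x)"
    using assms(2) by (rule DerL_elim)
  define g where "g k = (\<lambda>x. if k \<in> K1 then f1 k x else 0) + (\<lambda>x. if k \<in> K2 then f2 k x else 0)" for k
  have "is_der deg k (g k)" for k
    unfolding g_def using 1 2 by (intro is_der_add is_der_if) auto
  moreover have "\<theta> + \<eta> = (\<lambda>x. \<Sum>k\<in>K1 \<union> K2. g k x)"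
  proof
    fix x
    have "(\<Sum>k\<in>K1 \<union> K2. if k \<in> K1 then f1 k x else 0) = (\<Sum>k\<in>K1. f1 k x)"
      "(\<Sum>k\<in>K1 \<union> K2. if k \<in> K2 then f2 k x else 0) = (\<Sum>k\<in>K2. f2 k x)"
      using 1 2 by (simp_all add: sum.If_cases Int_absorb2)
    then show "(\<theta> + \<eta>) x = (\<Sum>k\<in>K1 \<union> K2. g k x)"
      unfolding g_def plus_op_apply sum.distrib using 1 2 by simp
  qed
  ultimately show ?thesis
    unfolding DerL_def using 1 2 by (intro CollectI exI[of _ "K1 \<union> K2"] exI[of _ g]) auto
qed

lemma DerL_smul:
  assumes "\<theta> \<in> DerL deg"
  shows "(\<lambda>x. smul c (\<theta> x)) \<in> DerL deg"
proof -
  obtain K f where K: "finite K" "\<forall>k\<in>K. is_der deg k (f k)" and \<theta>: "\<theta> = (\<lambda>x. \<Sum>k\<in>K. f k x)"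
    using assms by (rule DerL_elim)
  have "(\<lambda>x. smul c (\<theta> x)) = (\<lambda>x. \<Sum>k\<in>K. smul c (f k x))"
    unfolding \<theta> by (simp add: smul_sum)
  then show ?thesis
    unfolding DerL_def using K
    by (intro CollectI exI[of _ K] exI[of _ "\<lambda>k x. smul c (f k x)"]) (auto intro: is_der_smul)
qed

lemma degcomp_der_sum:
  assumes K: "finite K" "\<forall>k\<in>K. is_der deg k (f k)"
    and y: "y \<in> Lhat deg" "homog deg j y"
  shows "degcomp deg (\<Sum>k'\<in>K. f k' y) (j + k) = (if k \<in> K then f k y else 0)"
proof -
  have "degcomp deg (\<Sum>k'\<in>K. f k' y) (j + k) = (\<Sum>k'\<in>K. degcomp deg (f k' y) (j + k))"
    by (rule degcomp_sum)
  also have "\<dots> = (\<Sum>k'\<in>K. if k' = k then f k' y else 0)"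
  proof (rule sum.cong[OF refl])
    fix k' assume "k' \<in> K"
    then have "homog deg (j + k') (f k' y)"
      using K y by (intro der_homog) auto
    then show "degcomp deg (f k' y) (j + k) = (if k' = k then f k' y else 0)"
      using degcomp_homog_same degcomp_homog_other[of deg "j + k'" _ "j + k"] by auto
  qed
  also have "\<dots> = (if k \<in> K then f k y else 0)"
    using K(1) by (simp add: sum.delta')
  finally show ?thesis .
qed

lemma dercomp_sum_eq:
  assumes K: "finite K" "\<forall>k\<in>K. is_der deg k (f k)"
  shows "dercomp deg (\<lambda>x. \<Sum>k'\<in>K. f k' x) k = (\<lambda>x. if k \<in> K then f k x else 0)"
proof
  fix x
  show "dercomp deg (\<lambda>x. \<Sum>k'\<in>K. f k' x) k x = (if k \<in> K then f k x else 0)"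
  proof (cases "x \<in> Lhat deg")
    case False
    then have "\<forall>k'\<in>K. f k' x = 0"
      using K der_outside by blast
    then show ?thesis
      using False by (simp add: dercomp_def)
  next
    case True
    have xj: "degcomp deg x j \<in> Lhat deg" for j
      using True by (rule Lhat_degcomp)
    have "dercomp deg (\<lambda>x. \<Sum>k'\<in>K. f k' x) k x
        = (\<Sum>j\<in>degs deg x. if k \<in> K then f k (degcomp deg x j) else 0)"
      using True by (simp add: dercomp_def degcomp_der_sum[OF K xj homog_degcomp])
    also have "\<dots> = (if k \<in> K then f k (\<Sum>j\<in>degs deg x. degcomp deg x j) else 0)"
      using K xj by (auto intro: der_sum[symmetric])
    also have "\<dots> = (if k \<in> K then f k x else 0)"
      using degcomp_decomp[OF Lhat_finite_degs[OF True]] by simp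
    finally show ?thesis .
  qed
qed

lemma dercomp_DerL: "\<theta> \<in> DerL deg \<Longrightarrow> dercomp deg \<theta> k \<in> DerL deg"
proof (erule DerL_elim)
  fix K f assume K: "finite K" "\<forall>k\<in>K. is_der deg k (f k)" and \<theta>: "\<theta> = (\<lambda>x. \<Sum>k\<in>K. f k x)"
  show "dercomp deg \<theta> k \<in> DerL deg"
    unfolding \<theta> dercomp_sum_eq[OF K] using K by (intro DerL_der[of deg k] is_der_if) auto
qed

context V_filtration
begin

lemma DF_intro:
  assumes "\<theta> \<in> DerL deg" "\<And>r x. r \<ge> 1 \<Longrightarrow> x \<in> Ffilt deg Vf q r \<Longrightarrow> \<theta> x \<in> Ffilt deg Vf q (n + r)"
  shows "\<theta> \<in> DF deg Vf q n"
  using assms by (auto simp: DF_def)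

lemma DF_DerL: "\<theta> \<in> DF deg Vf q n \<Longrightarrow> \<theta> \<in> DerL deg"
  by (simp add: DF_def)

lemma DF_apply: "\<theta> \<in> DF deg Vf q n \<Longrightarrow> x \<in> Ffilt deg Vf q r \<Longrightarrow> \<theta> x \<in> Ffilt deg Vf q (n + r)"
  using Ffilt_pos by (auto simp: DF_def)

lemma DF_Suc_subset: "n \<ge> 1 \<Longrightarrow> DF deg Vf q (Suc n) \<subseteq> DF deg Vf q n"
proof
  fix \<theta> assume n: "n \<ge> 1" and \<theta>: "\<theta> \<in> DF deg Vf q (Suc n)"
  show "\<theta> \<in> DF deg Vf q n"
  proof (rule DF_intro)
    show "\<theta> \<in> DerL deg"
      using \<theta> by (rule DF_DerL)
    fix r x assume "r \<ge> 1" "x \<in> Ffilt deg Vf q r"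
    then have "\<theta> x \<in> Ffilt deg Vf q (Suc n + r)"
      using \<theta> DF_apply by blast
    then show "\<theta> x \<in> Ffilt deg Vf q (n + r)"
      using Ffilt_antimono[of "n + r" "Suc n + r"] n by auto
  qed
qed

lemma DF_zero: "n \<ge> 1 \<Longrightarrow> 0 \<in> DF deg Vf q n"
  by (intro DF_intro DerL_zero) (simp add: Ffilt_zero)

lemma DF_add: "\<theta> \<in> DF deg Vf q n \<Longrightarrow> \<eta> \<in> DF deg Vf q n \<Longrightarrow> \<theta> + \<eta> \<in> DF deg Vf q n"
  by (intro DF_intro DerL_add) (auto simp: plus_op_apply intro: Ffilt_add DF_apply dest: DF_DerL)

lemma DF_smul: "\<theta> \<in> DF deg Vf q n \<Longrightarrow> (\<lambda>x. smul c (\<theta> x)) \<in> DF deg Vf q n"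
  by (intro DF_intro DerL_smul) (auto intro: Ffilt_smul DF_apply dest: DF_DerL)

lemma DF_dercomp:
  assumes \<theta>: "\<theta> \<in> DF deg Vf q n" and n: "n \<ge> 1"
  shows "dercomp deg \<theta> k \<in> DF deg Vf q n"
proof (rule DF_intro)
  show "dercomp deg \<theta> k \<in> DerL deg"
    using \<theta> by (intro dercomp_DerL DF_DerL)
  fix r x assume "r \<ge> 1" "x \<in> Ffilt deg Vf q r"
  then have "(\<Sum>j\<in>degs deg x. degcomp deg (\<theta> (degcomp deg x j)) (j + k)) \<in> Ffilt deg Vf q (n + r)"
    using n \<theta> by (intro Ffilt_sum ballI Ffilt_degcomp DF_apply) auto
  then show "dercomp deg \<theta> k x \<in> Ffilt deg Vf q (n + r)"
    using Ffilt_Lhat[OF \<open>x \<in> Ffilt deg Vf q r\<close>] by (simp add: dercomp_def)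
qed

lemma DF_dbr:
  assumes \<theta>: "\<theta> \<in> DF deg Vf q m" "is_der deg j \<theta>" and \<eta>: "\<eta> \<in> DF deg Vf q n" "is_der deg k \<eta>"
  shows "dbr j k \<theta> \<eta> \<in> DF deg Vf q (m + n)"
proof (rule DF_intro)
  show "dbr j k \<theta> \<eta> \<in> DerL deg"
    by (rule DerL_der[OF is_der_dbr[OF \<theta>(2) \<eta>(2)]])
  fix r x assume x: "x \<in> Ffilt deg Vf q r"
  have "\<theta> (\<eta> x) \<in> Ffilt deg Vf q (m + (n + r))" "\<eta> (\<theta> x) \<in> Ffilt deg Vf q (n + (m + r))"
    by (rule DF_apply[OF \<theta>(1) DF_apply[OF \<eta>(1) x]] DF_apply[OF \<eta>(1) DF_apply[OF \<theta>(1) x]])+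
  then have "\<theta> (\<eta> x) \<in> Ffilt deg Vf q (m + n + r)" "\<eta> (\<theta> x) \<in> Ffilt deg Vf q (m + n + r)"
    by (simp_all add: ac_simps)
  then show "dbr j k \<theta> \<eta> x \<in> Ffilt deg Vf q (m + n + r)"
    unfolding dbr_def by (intro Ffilt_diff Ffilt_smul)
qed

lemma DF_Inter: "(\<Inter>n\<in>{1..}. DF deg Vf q n) = {0}"
proof (intro equalityI subsetI)
  fix \<theta> assume \<theta>: "\<theta> \<in> (\<Inter>n\<in>{1..}. DF deg Vf q n)"
  have "\<theta> x w = 0" for x w
  proof (cases "x \<in> Lhat deg")
    case True
    have "\<theta> \<in> DF deg Vf q (tri q (Suc (length w)) + 1)"
      using \<theta> by auto
    then have "\<theta> x \<in> Ffilt deg Vf q (tri q (Suc (length w)) + 1 + 1)"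
      using Lhat_Ffilt1[OF True] by (rule DF_apply)
    then show ?thesis
      by (rule Ffilt_vanish) auto
  next
    case False
    then show ?thesis
      using \<theta> DerL_outside DF_DerL by fastforce
  qed
  then show "\<theta> \<in> {0}"
    by (simp add: fun_eq_iff)
qed (auto intro: DF_zero)

end

context minimal_differential
begin

lemma DF_differential:
  assumes \<theta>: "\<theta> \<in> DF deg Vf q n" "is_der deg j \<theta>"
  shows "dbr (-1) j d \<theta> \<in> DF deg Vf q n"
proof (rule DF_intro)
  show "dbr (-1) j d \<theta> \<in> DerL deg"
    by (rule DerL_der[OF is_der_dbr[OF d_der \<theta>(2)]])
  fix r x assume x: "x \<in> Ffilt deg Vf q r"
  have "d (\<theta> x) \<in> Ffilt deg Vf q (n + r)" "\<theta> (d x) \<in> Ffilt deg Vf q (n + r)"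
    by (rule d_Ffilt[OF DF_apply[OF \<theta>(1) x]] DF_apply[OF \<theta>(1) d_Ffilt[OF x]])+
  then show "dbr (-1) j d \<theta> x \<in> Ffilt deg Vf q (n + r)"
    unfolding dbr_def by (intro Ffilt_diff Ffilt_smul)
qed

end

section \<open>Completeness\<close>

locale DF_cauchy_sequence = V_filtration +
  fixes k :: int and \<Theta> :: "nat \<Rightarrow> 'b tens \<Rightarrow> 'b tens"
  assumes cauchy: "\<forall>n\<ge>1. \<Theta> n \<in> DF deg Vf q 1 \<and> is_der deg k (\<Theta> n) \<and> \<Theta> (Suc n) - \<Theta> n \<in> DF deg Vf q n"
begin

text \<open>From this index m on, the values of the sequence agree on all words of length at most L:
  the difference of consecutive terms maps into F^(m+1), which vanishes on such words.\<close>

definition stable_index :: "nat \<Rightarrow> nat" where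
  "stable_index L = tri q (Suc L) + 1"

lemma stable_index_mono: "L \<le> L' \<Longrightarrow> stable_index L \<le> stable_index L'"
  using tri_mono[of "Suc L" "Suc L'" q] by (simp add: stable_index_def)

lemma is_der_Theta: "m \<ge> 1 \<Longrightarrow> is_der deg k (\<Theta> m)"
  using cauchy by blast

lemma is_der_Theta_stable: "is_der deg k (\<Theta> (stable_index L))"
  by (rule is_der_Theta) (simp add: stable_index_def)

lemma Theta_Suc_eq:
  assumes m: "m \<ge> stable_index L" and w: "length w \<le> L"
  shows "\<Theta> (Suc m) x w = \<Theta> m x w"
proof (cases "x \<in> Lhat deg")
  case True
  have "m \<ge> 1"
    using m by (simp add: stable_index_def)
  then have "\<Theta> (Suc m) - \<Theta> m \<in> DF deg Vf q m"
    using cauchy by blast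
  then have "(\<Theta> (Suc m) - \<Theta> m) x \<in> Ffilt deg Vf q (m + 1)"
    using Lhat_Ffilt1[OF True] by (rule DF_apply)
  then have "(\<Theta> (Suc m) - \<Theta> m) x w = 0"
    by (rule Ffilt_vanish[where L = L]) (use m w in \<open>auto simp: stable_index_def\<close>)
  then show ?thesis
    by simp
next
  case False
  have "m \<ge> 1"
    using m by (simp add: stable_index_def)
  then show ?thesis
    using der_outside[OF is_der_Theta False] by simp
qed

lemma Theta_stable:
  assumes "m \<ge> stable_index L" "length w \<le> L"
  shows "\<Theta> m x w = \<Theta> (stable_index L) x w"
  using assms(1)
proof (induction m rule: dec_induct)
  case (step m)
  then show ?case
    using Theta_Suc_eq[OF _ assms(2)] by simp
qed simp

definition lim_der :: "'b tens \<Rightarrow> 'b tens" where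
  "lim_der x = (\<lambda>w. \<Theta> (stable_index (length w)) x w)"

lemma lim_der_apply: "m \<ge> stable_index (length w) \<Longrightarrow> lim_der x w = \<Theta> m x w"
  unfolding lim_der_def by (rule Theta_stable[OF _ order_refl, symmetric])

lemma lim_der_apply_short:
  "length u \<le> length w \<Longrightarrow> lim_der x u = \<Theta> (stable_index (length w)) x u"
  by (intro lim_der_apply stable_index_mono)

lemma lim_der_Lhat:
  assumes x: "x \<in> Lhat deg"
  shows "lim_der x \<in> Lhat deg"
proof -
  have "degs deg (lim_der x) \<subseteq> (\<lambda>j. j + k) ` degs deg x"
    using der_degs[OF is_der_Theta_stable x] by (auto simp: degs_def lim_der_def)
  then have "finite (degs deg (lim_der x))"
    using Lhat_finite_degs[OF x] by (auto intro: finite_subset)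
  moreover have Theta_x: "\<Theta> (stable_index n) x \<in> Lhat deg" for n
    by (rule der_Lhat[OF is_der_Theta_stable x])
  moreover have "{w. length w = n \<and> lim_der x w \<noteq> 0}
      = {w. length w = n \<and> \<Theta> (stable_index n) x w \<noteq> 0}" for n
    by (auto simp: lim_der_def)
  moreover have "lencomp (lim_der x) n = lencomp (\<Theta> (stable_index n) x) n" for n
    by (auto simp: fun_eq_iff lencomp_apply lim_der_def)
  ultimately show ?thesis
    by (simp add: Lhat_def TT_def)
qed

lemma is_der_lim_der: "is_der deg k lim_der"
  unfolding is_der_def
proof (intro conjI allI ballI impI)
  fix x assume "x \<notin> Lhat deg"
  then show "lim_der x = 0"
    by (simp add: fun_eq_iff lim_der_def der_outside[OF is_der_Theta_stable])
next
  fix x assume "x \<in> Lhat deg"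
  then show "lim_der x \<in> Lhat deg"
    by (rule lim_der_Lhat)
next
  fix x y assume "x \<in> Lhat deg" "y \<in> Lhat deg"
  then show "lim_der (x + y) = lim_der x + lim_der y"
    by (simp add: fun_eq_iff lim_der_def der_add[OF is_der_Theta_stable])
next
  fix c x assume "x \<in> Lhat deg"
  then show "lim_der (smul c x) = smul c (lim_der x)"
    by (simp add: fun_eq_iff lim_der_def der_smul[OF is_der_Theta_stable])
next
  fix j x assume "x \<in> Lhat deg" "homog deg j x"
  then show "homog deg (j + k) (lim_der x)"
    using der_homog[OF is_der_Theta_stable] by (simp add: homog_def lim_der_def)
next
  fix j x y assume x: "x \<in> Lhat deg" and y: "y \<in> Lhat deg" and h: "homog deg j x"
  show "lim_der (br deg x y) = br deg (lim_der x) y + smul (ksign (k * j)) (br deg x (lim_der y))"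
  proof
    fix w :: "'b list"
    let ?M = "stable_index (length w)"
    have "lim_der (br deg x y) w = br deg (\<Theta> ?M x) y w + ksign (k * j) * br deg x (\<Theta> ?M y) w"
      by (simp add: lim_der_def der_br[OF is_der_Theta_stable x y h])
    also have "br deg (\<Theta> ?M x) y w = br deg (lim_der x) y w"
      by (rule br_local) (simp add: lim_der_apply_short)
    also have "br deg x (\<Theta> ?M y) w = br deg x (lim_der y) w"
      by (rule br_local) (simp add: lim_der_apply_short)
    finally show "lim_der (br deg x y) w
        = (br deg (lim_der x) y + smul (ksign (k * j)) (br deg x (lim_der y))) w"
      by simp
  qed
qed

lemma Theta_diff_Ffilt:
  assumes n: "n \<ge> 1" and m: "m \<ge> n" and x: "x \<in> Ffilt deg Vf q r"
  shows "(\<Theta> m - \<Theta> n) x \<in> Ffilt deg Vf q (n + r)"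
  using m
proof (induction m rule: dec_induct)
  case base
  have "(\<Theta> n - \<Theta> n) x = 0"
    by (simp add: minus_op_apply)
  then show ?case
    using Ffilt_zero[of "n + r"] n by (simp only:)
next
  case (step m)
  have "\<Theta> (Suc m) - \<Theta> m \<in> DF deg Vf q m"
    using cauchy step n by simp
  then have "(\<Theta> (Suc m) - \<Theta> m) x \<in> Ffilt deg Vf q (m + r)"
    using x by (rule DF_apply)
  moreover have "Ffilt deg Vf q (m + r) \<subseteq> Ffilt deg Vf q (n + r)"
    using step n by (intro Ffilt_antimono) auto
  ultimately have last_step: "(\<Theta> (Suc m) - \<Theta> m) x \<in> Ffilt deg Vf q (n + r)"
    by blast
  have "(\<Theta> (Suc m) - \<Theta> n) x = (\<Theta> (Suc m) - \<Theta> m) x + (\<Theta> m - \<Theta> n) x"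
    by (simp add: minus_op_apply)
  then show ?case
    using Ffilt_add[OF last_step step.IH] by (simp only:)
qed

lemma lim_der_diff_DF:
  assumes n: "n \<ge> 1"
  shows "lim_der - \<Theta> n \<in> DF deg Vf q n"
proof (rule DF_intro)
  have diff: "is_der deg k (lim_der - \<Theta> n)"
    by (rule is_der_diff[OF is_der_lim_der is_der_Theta[OF n]])
  then show "lim_der - \<Theta> n \<in> DerL deg"
    by (rule DerL_der)
  fix r x assume r: "r \<ge> 1" and x: "x \<in> Ffilt deg Vf q r"
  show "(lim_der - \<Theta> n) x \<in> Ffilt deg Vf q (n + r)"
  proof (rule Ffilt_limit)
    show "(lim_der - \<Theta> n) x \<in> Lhat deg"
      by (rule der_Lhat[OF diff Ffilt_Lhat[OF x]])
    fix L
    let ?m = "max n (stable_index L)"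
    have "(lim_der - \<Theta> n) x w = (\<Theta> ?m - \<Theta> n) x w" if "length w \<le> L" for w
      using stable_index_mono[OF that] by (simp add: minus_op_apply lim_der_apply[where m = ?m])
    moreover have "(\<Theta> ?m - \<Theta> n) x \<in> Ffilt deg Vf q (n + r)"
      by (rule Theta_diff_Ffilt[OF n _ x]) simp
    ultimately show "\<exists>z\<in>Ffilt deg Vf q (n + r). \<forall>w. length w \<le> L \<longrightarrow> (lim_der - \<Theta> n) x w = z w"
      by blast
  qed (use n in simp)
qed

lemma lim_der_DF1: "lim_der \<in> DF deg Vf q 1"
proof -
  have "(lim_der - \<Theta> 1) + \<Theta> 1 \<in> DF deg Vf q 1"
    using lim_der_diff_DF[of 1] cauchy by (intro DF_add) auto
  then show ?thesis
    by simp
qed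

end

context V_filtration
begin

lemma DF_complete:
  assumes "\<forall>n\<ge>1. \<Theta> n \<in> DF deg Vf q 1 \<and> is_der deg k (\<Theta> n) \<and> \<Theta> (Suc n) - \<Theta> n \<in> DF deg Vf q n"
  shows "\<exists>\<theta>\<in>DF deg Vf q 1. is_der deg k \<theta> \<and> (\<forall>n\<ge>1. \<theta> - \<Theta> n \<in> DF deg Vf q n)"
proof -
  interpret DF_cauchy_sequence deg Vf q k \<Theta>
    using assms by unfold_locales
  show ?thesis
    using lim_der_DF1 is_der_lim_der lim_der_diff_DF by blast
qed

end

theorem proposition2p2:
  fixes deg :: "'b \<Rightarrow> int" and d :: "'b tens \<Rightarrow> 'b tens"
    and Vf :: "nat \<Rightarrow> 'b tens set" and q :: nat
  assumes connected: "\<forall>k<0. \<forall>x\<in>Lhat deg. homog deg k x \<longrightarrow> x = 0"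
    and bounded: "\<exists>m. \<forall>k>m. \<forall>x\<in>Vsp deg. homog deg k x \<longrightarrow> x = 0"
    and d_der: "is_der deg (-1) d"
    and d_sq: "\<forall>x. d (d x) = 0"
    and d_filt: "\<forall>n. \<forall>x\<in>Lge deg n. d x \<in> Lge deg n"
    and minimal: "\<forall>v\<in>Vsp deg. d v \<in> Lge deg 2"
    and Vf0: "Vf 0 = Vsp deg"
    and Vf_dec: "\<forall>\<alpha><q. Vf (Suc \<alpha>) \<subseteq> Vf \<alpha>"
    and Vfq: "Vf q = {0}"
    and Vf_graded: "\<forall>\<alpha>\<le>q. graded_subspace_V deg (Vf \<alpha>)"
  shows
    \<comment> \<open>decreasing filtration of graded subspaces of Der L\<close>
    "(\<forall>n\<ge>1. DF deg Vf q (Suc n) \<subseteq> DF deg Vf q n) \<and>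
     (\<forall>n\<ge>1. 0 \<in> DF deg Vf q n \<and>
        (\<forall>\<theta>\<in>DF deg Vf q n. \<forall>\<eta>\<in>DF deg Vf q n. \<theta> + \<eta> \<in> DF deg Vf q n) \<and>
        (\<forall>c. \<forall>\<theta>\<in>DF deg Vf q n. (\<lambda>x. smul c (\<theta> x)) \<in> DF deg Vf q n) \<and>
        (\<forall>\<theta>\<in>DF deg Vf q n. \<forall>k. dercomp deg \<theta> k \<in> DF deg Vf q n)) \<and>
     \<comment> \<open>stable under the differential D = [d,-]\<close>
     (\<forall>n\<ge>1. \<forall>j. \<forall>\<theta>\<in>DF deg Vf q n. is_der deg j \<theta> \<longrightarrow> dbr (-1) j d \<theta> \<in> DF deg Vf q n) \<and>
     \<comment> \<open>[F^m, F^n] \<subseteq> F^(m+n)\<close>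
     (\<forall>m\<ge>1. \<forall>n\<ge>1. \<forall>j k. \<forall>\<theta>\<in>DF deg Vf q m. \<forall>\<eta>\<in>DF deg Vf q n.
        is_der deg j \<theta> \<longrightarrow> is_der deg k \<eta> \<longrightarrow> dbr j k \<theta> \<eta> \<in> DF deg Vf q (m + n)) \<and>
     \<comment> \<open>completeness: F^1 \<rightarrow> lim F^1/F^n is injective and (degreewise) surjective\<close>
     (\<Inter>n\<in>{1..}. DF deg Vf q n) = {0} \<and>
     (\<forall>k. \<forall>\<Theta>::nat \<Rightarrow> ('b tens \<Rightarrow> 'b tens).
        (\<forall>n\<ge>1. \<Theta> n \<in> DF deg Vf q 1 \<and> is_der deg k (\<Theta> n) \<and> \<Theta> (Suc n) - \<Theta> n \<in> DF deg Vf q n) \<longrightarrow>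
        (\<exists>\<theta>\<in>DF deg Vf q 1. is_der deg k \<theta> \<and> (\<forall>n\<ge>1. \<theta> - \<Theta> n \<in> DF deg Vf q n)))"
proof -
  interpret minimal_differential deg Vf q d
    using Vf0 Vf_dec Vfq Vf_graded d_der d_filt minimal by unfold_locales auto
  show ?thesis (is "?mono \<and> ?subspace \<and> ?differential \<and> ?bracket \<and> ?separated \<and> ?complete")
  proof (intro conjI)
    show ?mono
      using DF_Suc_subset by blast
    show ?subspace
      using DF_zero DF_add DF_smul DF_dercomp by blast
    show ?differential
      using DF_differential by blast
    show ?bracket
      using DF_dbr by blast
    show ?separated
      by (rule DF_Inter)
    show ?complete
      using DF_complete by blast
  qed
qed

end
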